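(* In the linear mixture MDP setting with Algorithm 1 run for $K$ episodes as described in the context, with probability at least $1-\delta$, for every reward function $R=\{R_h\}$ with $R_h:\mathcal{S}\times\mathcal{A}\to[0,1]$, the policy $\hat\pi_R$ returned in the planning phase by an $\epsilon_{\rm opt}$-optimal plug-in solver on $(\mathcal{S},\mathcal{A},\tilde P,R,H,\nu)$ satisfies $$V_1^*(s_1,R)-V_1^{\hat\pi_R}(s_1,R)\le 4\tilde V_1^*(s_1,R_K)+\epsilon_{\rm opt},$$ where $R_K=\{R_{K,h}\}_h$ is the exploration-driven reward used in episode $K$ of the exploration phase.
   Context: Episodic MDP: state set $\mathcal{S}$, action set $\mathcal{A}$, horizon $H$, transitions $P_h(\cdot|s,a)$, deterministic rewards; every episode starts at fixed $s_1$. For a deterministic policy $\pi$ and transition $Q$, $V_h^{\pi,Q}(s,R)=\mathbb{E}[\sum_{h'=h}^H R_{h'}(s_{h'},\pi_{h'}(s_{h'}))\mid s_h=s,Q]$; $V^\pi_h$ uses the true $P$, $V_h^*=\max_\pi V_h^\pi$, $\hat V^{*,\tilde P}_1=\max_\pi V_1^{\pi,\tilde P}$. An $\epsilon_{\rm opt}$-optimal plug-in solver returns $\hat\pi_R$ with $\hat V_1^{*,\tilde P}(s_1,R)-V_1^{\hat\pi_R,\tilde P}(s_1,R)\le\epsilon_{\rm opt}$. For a nonnegative reward $R$ define $\tilde V^*_{H+1}(\cdot,R)=0$ and $\tilde V^*_h(s,R)=\max_{a}\min\{R_h(s,a)+\sum_{s'}P_h(s'|s,a)\tilde V^*_{h+1}(s',R),H\}$.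 Linear mixture MDP: known $\phi:\mathcal{S}\times\mathcal{A}\times\mathcal{S}\to\mathbb{R}^d$ with $\|\sum_{s'}\phi(s,a,s')V(s')\|_2\le1$ for all $V:\mathcal{S}\to[0,1]$, and unknown $\theta_h$, $\|\theta_h\|_2\le B$, with $P_h(s'|s,a)=\theta_h^\top\phi(s,a,s')$. $\|x\|_M=\sqrt{x^\top Mx}$. Algorithm 1: $\lambda=B^{-2}$, $\beta=H\sqrt{d\log(4H^3K\lambda^{-1}\delta^{-1})}+\sqrt\lambda B$, $\mathcal{V}=\{V:\mathcal{S}\to[0,H]\}$. For $k=1,\dots,K$: $V_{k,H+1}\equiv0$; for $h=H,\dots,1$: $\Lambda_{k,h}=\sum_{t<k}\phi_{t,h}(s_{t,h},a_{t,h})\phi_{t,h}(s_{t,h},a_{t,h})^\top+\lambda I$; $\hat\theta_{k,h}=\Lambda_{k,h}^{-1}\sum_{t<k}\phi_{t,h}(s_{t,h},a_{t,h})\tilde V_{t,h+1,s_{t,h},a_{t,h}}(s_{t,h+1})$; $\tilde V_{k,h+1,s,a}\in\arg\max_{V\in\mathcal{V}}\|\sum_{s'}\phi(s,a,s')V(s')\|_{\Lambda_{k,h}^{-1}}$; $\phi_{k,h}(s,a)=\sum_{s'}\phi(s,a,s')\tilde V_{k,h+1,s,a}(s')$; $u_{k,h}(s,a)=\beta\|\phi_{k,h}(s,a)\|_{\Lambda_{k,h}^{-1}}$; $R_{k,h}=u_{k,h}$; $Q_{k,h}(s,a)=\min\{\hat\theta_{k,h}^\top\sum_{s'}\phi(s,a,s')V_{k,h+1}(s')+R_{k,h}(s,a)+u_{k,h}(s,a),H\}$;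 $V_{k,h}=\max_aQ_{k,h}$, $\pi_{k,h}$ greedy. Execute $\pi_k$ from $s_1$ to collect $(s_{k,h},a_{k,h})_{h}$. Output $\tilde P_h=\tilde\theta_h^\top\phi$ with $\tilde\theta_h$ making $\tilde P_h$ a valid kernel and $\|\tilde\theta_h-\hat\theta_{K,h}\|_{\Lambda_{K,h}}\le\beta$. *)

theory Defs
  imports "HOL-Analysis.Analysis" "HOL-Probability.Probability"
begin

type_synonym ('s,'a) policy = "nat \<Rightarrow> 's \<Rightarrow> 'a"
(* a trajectory: states s_1..s_{H+1} and actions a_1..a_H (lists, 0-based storage) *)
type_synonym ('s,'a) traj = "'s list \<times> 'a list"

function Vpi :: "nat \<Rightarrow> (nat \<Rightarrow> 's::finite \<Rightarrow> 'a \<Rightarrow> 's \<Rightarrow> real) \<Rightarrow> ('s,'a) policy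
    \<Rightarrow> (nat \<Rightarrow> 's \<Rightarrow> 'a \<Rightarrow> real) \<Rightarrow> nat \<Rightarrow> 's \<Rightarrow> real" where
  "Vpi H Q \<pi> R h s = (if H < h then 0 else
     R h s (\<pi> h s) + (\<Sum>s'\<in>UNIV. Q h s (\<pi> h s) s' * Vpi H Q \<pi> R (Suc h) s'))"
  by pat_completeness auto
termination by (relation "Wellfounded.measure (\<lambda>(H,Q,\<pi>,R,h,s). Suc H - h)") auto

definition Vstar :: "nat \<Rightarrow> (nat \<Rightarrow> 's::finite \<Rightarrow> 'a \<Rightarrow> 's \<Rightarrow> real)
    \<Rightarrow> (nat \<Rightarrow> 's \<Rightarrow> 'a \<Rightarrow> real) \<Rightarrow> nat \<Rightarrow> 's \<Rightarrow> real" where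
  "Vstar H Q R h s = Sup (range (\<lambda>\<pi>. Vpi H Q \<pi> R h s))"

function Vtstar :: "nat \<Rightarrow> (nat \<Rightarrow> 's::finite \<Rightarrow> 'a::finite \<Rightarrow> 's \<Rightarrow> real)
    \<Rightarrow> (nat \<Rightarrow> 's \<Rightarrow> 'a \<Rightarrow> real) \<Rightarrow> nat \<Rightarrow> 's \<Rightarrow> real" where
  "Vtstar H Q R h s = (if H < h then 0 else
     Max (range (\<lambda>a. min (R h s a + (\<Sum>s'\<in>UNIV. Q h s a s' * Vtstar H Q R (Suc h) s')) (real H))))"
  by pat_completeness auto
termination by (relation "Wellfounded.measure (\<lambda>(H,Q,R,h,s). Suc H - h)") auto

definition wnorm :: "real^'d \<Rightarrow> real^'d^'d \<Rightarrow> real" where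
  "wnorm x M = sqrt (x \<bullet> (M *v x))"

definition featV :: "('s::finite \<Rightarrow> 'a \<Rightarrow> 's \<Rightarrow> real^'d) \<Rightarrow> 's \<Rightarrow> 'a \<Rightarrow> ('s \<Rightarrow> real) \<Rightarrow> real^'d" where
  "featV phi s a V = (\<Sum>s'\<in>UNIV. V s' *\<^sub>R phi s a s')"

definition Vset :: "nat \<Rightarrow> ('s \<Rightarrow> real) set" where
  "Vset H = {V. \<forall>s. 0 \<le> V s \<and> V s \<le> real H}"

definition Vsel :: "('s::finite \<Rightarrow> 'a \<Rightarrow> 's \<Rightarrow> real^'d) \<Rightarrow> nat \<Rightarrow> real^'d^'d \<Rightarrow> 's \<Rightarrow> 'a \<Rightarrow> ('s \<Rightarrow> real)" where
  "Vsel phi H M s a = (SOME V. V \<in> Vset H \<and>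
     (\<forall>W\<in>Vset H. wnorm (featV phi s a W) (matrix_inv M) \<le> wnorm (featV phi s a V) (matrix_inv M)))"

definition phiK :: "('s::finite \<Rightarrow> 'a \<Rightarrow> 's \<Rightarrow> real^'d) \<Rightarrow> nat \<Rightarrow> real^'d^'d \<Rightarrow> 's \<Rightarrow> 'a \<Rightarrow> real^'d" where
  "phiK phi H M s a = featV phi s a (Vsel phi H M s a)"

definition outer :: "real^'d \<Rightarrow> real^'d^'d" where
  "outer x = (\<chi> i j. x $ i * x $ j)"

(* s_{t,h} and a_{t,h} from the history (episodes t = 1,2,..., steps h = 1,2,...) *)
definition st :: "('s,'a) traj list \<Rightarrow> nat \<Rightarrow> nat \<Rightarrow> 's" where
  "st hs t h = fst (hs ! (t - 1)) ! (h - 1)"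
definition ac :: "('s,'a) traj list \<Rightarrow> nat \<Rightarrow> nat \<Rightarrow> 'a" where
  "ac hs t h = snd (hs ! (t - 1)) ! (h - 1)"

primrec Gram :: "('s::finite \<Rightarrow> 'a \<Rightarrow> 's \<Rightarrow> real^'d) \<Rightarrow> nat \<Rightarrow> real \<Rightarrow> ('s,'a) traj list
    \<Rightarrow> nat \<Rightarrow> nat \<Rightarrow> real^'d^'d" where
  "Gram phi H lam hs h 0 = lam *\<^sub>R mat 1"
| "Gram phi H lam hs h (Suc n) =
     Gram phi H lam hs h n + outer (phiK phi H (Gram phi H lam hs h n) (st hs (Suc n) h) (ac hs (Suc n) h))"

definition Lam :: "('s::finite \<Rightarrow> 'a \<Rightarrow> 's \<Rightarrow> real^'d) \<Rightarrow> nat \<Rightarrow> real \<Rightarrow> ('s,'a) traj list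
    \<Rightarrow> nat \<Rightarrow> nat \<Rightarrow> real^'d^'d" where
  "Lam phi H lam hs k h = Gram phi H lam hs h (k - 1)"

definition thetahat :: "('s::finite \<Rightarrow> 'a \<Rightarrow> 's \<Rightarrow> real^'d) \<Rightarrow> nat \<Rightarrow> real \<Rightarrow> ('s,'a) traj list
    \<Rightarrow> nat \<Rightarrow> nat \<Rightarrow> real^'d" where
  "thetahat phi H lam hs k h = matrix_inv (Lam phi H lam hs k h) *v
     (\<Sum>t\<in>{1..<k}. Vsel phi H (Lam phi H lam hs t h) (st hs t h) (ac hs t h) (st hs t (Suc h))
                    *\<^sub>R phiK phi H (Lam phi H lam hs t h) (st hs t h) (ac hs t h))"

(* u_{k,h}(s,a) (= exploration reward R_{k,h}) *)
definition bonus :: "('s::finite \<Rightarrow> 'a \<Rightarrow> 's \<Rightarrow> real^'d) \<Rightarrow> nat \<Rightarrow> real \<Rightarrow> real \<Rightarrow> ('s,'a) traj list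
    \<Rightarrow> nat \<Rightarrow> nat \<Rightarrow> 's \<Rightarrow> 'a \<Rightarrow> real" where
  "bonus phi H lam beta hs k h s a =
     beta * wnorm (phiK phi H (Lam phi H lam hs k h) s a) (matrix_inv (Lam phi H lam hs k h))"

function Vopt :: "('s::finite \<Rightarrow> 'a::finite \<Rightarrow> 's \<Rightarrow> real^'d) \<Rightarrow> nat \<Rightarrow> real \<Rightarrow> real \<Rightarrow> ('s,'a) traj list
    \<Rightarrow> nat \<Rightarrow> nat \<Rightarrow> 's \<Rightarrow> real" where
  "Vopt phi H lam beta hs k h s = (if H < h then 0 else
     Max (range (\<lambda>a. min (thetahat phi H lam hs k h \<bullet> featV phi s a (Vopt phi H lam beta hs k (Suc h))
        + bonus phi H lam beta hs k h s a + bonus phi H lam beta hs k h s a) (real H))))"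
  by pat_completeness auto
termination by (relation "Wellfounded.measure (\<lambda>(phi,H,lam,beta,hs,k,h,s). Suc H - h)") auto

definition Qopt :: "('s::finite \<Rightarrow> 'a::finite \<Rightarrow> 's \<Rightarrow> real^'d) \<Rightarrow> nat \<Rightarrow> real \<Rightarrow> real \<Rightarrow> ('s,'a) traj list
    \<Rightarrow> nat \<Rightarrow> nat \<Rightarrow> 's \<Rightarrow> 'a \<Rightarrow> real" where
  "Qopt phi H lam beta hs k h s a = min (thetahat phi H lam hs k h \<bullet> featV phi s a (Vopt phi H lam beta hs k (Suc h))
        + bonus phi H lam beta hs k h s a + bonus phi H lam beta hs k h s a) (real H)"

definition polk :: "('s::finite \<Rightarrow> 'a::finite \<Rightarrow> 's \<Rightarrow> real^'d) \<Rightarrow> nat \<Rightarrow> real \<Rightarrow> real \<Rightarrow> ('s,'a) traj list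
    \<Rightarrow> nat \<Rightarrow> ('s,'a) policy" where
  "polk phi H lam beta hs k h s =
     (SOME a. \<forall>b. Qopt phi H lam beta hs k h s b \<le> Qopt phi H lam beta hs k h s a)"

primrec gen :: "(nat \<Rightarrow> 's \<Rightarrow> 'a \<Rightarrow> 's pmf) \<Rightarrow> ('s,'a) policy \<Rightarrow> nat \<Rightarrow> nat \<Rightarrow> 's \<Rightarrow> ('s,'a) traj pmf" where
  "gen P \<pi> h 0 s = return_pmf ([s], [])"
| "gen P \<pi> h (Suc n) s = bind_pmf (P h s (\<pi> h s))
     (\<lambda>s'. map_pmf (\<lambda>(ss, as). (s # ss, \<pi> h s # as)) (gen P \<pi> (Suc h) n s'))"

(* sequential exploration: pol maps the current history to the next policy *)
primrec explore :: "(nat \<Rightarrow> 's \<Rightarrow> 'a \<Rightarrow> 's pmf) \<Rightarrow> 's \<Rightarrow> nat \<Rightarrow> (('s,'a) traj list \<Rightarrow> ('s,'a) policy)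
    \<Rightarrow> nat \<Rightarrow> ('s,'a) traj list \<Rightarrow> ('s,'a) traj list pmf" where
  "explore P s1 H pol 0 hs = return_pmf hs"
| "explore P s1 H pol (Suc n) hs =
     bind_pmf (gen P (pol hs) 1 H s1) (\<lambda>\<tau>. explore P s1 H pol n (hs @ [\<tau>]))"

definition exploration :: "('s::finite \<Rightarrow> 'a::finite \<Rightarrow> 's \<Rightarrow> real^'d) \<Rightarrow> nat \<Rightarrow> real \<Rightarrow> real
    \<Rightarrow> (nat \<Rightarrow> 's \<Rightarrow> 'a \<Rightarrow> 's pmf) \<Rightarrow> 's \<Rightarrow> nat \<Rightarrow> ('s,'a) traj list pmf" where
  "exploration phi H lam beta P s1 K =
     explore P s1 H (\<lambda>hs. polk phi H lam beta hs (Suc (length hs))) K []"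

end

(*
  On the event that for every step h the true parameter theta_h lies within beta of the ridge
  estimate thetahat_{K,h} in the Lambda_{K,h}-norm, every model thetat of the confidence set
  predicts E[V(s')] up to 2 u_{K,h}(s,a) for all V : S -> [0,H], by Cauchy-Schwarz in that norm
  and because the bonus feature maximises the dual norm over such V.  The simulation lemma then
  keeps the values of every policy under thetat and under P within 2 Vtstar(R_K) of each other;
  using it for an optimal policy of P and for the returned policy gives the factor 4.

  The event has probability at least 1 - delta.  Indeed thetahat - theta = Lambda^-1 S -
  lam Lambda^-1 theta, where S = sum_t eta_t phi_t collects the bounded, conditionally centred
  regression noise.  Since |S|^2 in the Lambda^-1-norm equals max_z (2 z.S - z.Lambda z), it
  suffices to control, for z in a finite net, the Hoeffding exponential supermartingales
  exp (x.S - H^2/8 sum_t (x.phi_t)^2) along the exploration, with a union bound over the net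
  and the H steps.
*)

theory Submission
  imports Defs
begin

section \<open>Weighted norms\<close>

definition psd_symmetric :: "real^'n^'n \<Rightarrow> bool" where
  "psd_symmetric M \<longleftrightarrow> (\<forall>u v. u \<bullet> (M *v v) = v \<bullet> (M *v u)) \<and> (\<forall>u. 0 \<le> u \<bullet> (M *v u))"

lemma wnorm_nonneg: "psd_symmetric M \<Longrightarrow> 0 \<le> wnorm u M"
  by (simp add: wnorm_def psd_symmetric_def)

lemma wnorm_minus [simp]: "wnorm (- u) M = wnorm u M"
  by (simp add: wnorm_def vec.neg)

lemma wnorm_cauchy_schwarz:
  assumes "psd_symmetric M"
  shows "\<bar>u \<bullet> (M *v v)\<bar> \<le> wnorm u M * wnorm v M"
proof -
  define a b c where "a = u \<bullet> (M *v u)" and "b = v \<bullet> (M *v v)" and "c = u \<bullet> (M *v v)"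
  have sym: "v \<bullet> (M *v u) = c" and a: "0 \<le> a" and b: "0 \<le> b"
    using assms by (auto simp: psd_symmetric_def a_def b_def c_def)
  have quadratic: "0 \<le> a - 2 * t * c + t\<^sup>2 * b" for t
  proof -
    have "0 \<le> (u - t *\<^sub>R v) \<bullet> (M *v (u - t *\<^sub>R v))"
      using assms by (simp add: psd_symmetric_def)
    also have "\<dots> = a - 2 * t * c + t\<^sup>2 * b"
      using sym by (simp add: a_def b_def c_def matrix_vector_mult_diff_distrib
          matrix_vector_mult_scaleR inner_diff_left inner_diff_right algebra_simps power2_eq_square)
    finally show ?thesis .
  qed
  have "c\<^sup>2 \<le> a * b"
  proof (cases "b = 0")
    case True
    have "c = 0"
    proof (rule ccontr)
      assume "c \<noteq> 0"
      then have "a - 2 * ((a + 1) / (2 * c)) * c = -1" by (simp add: field_simps)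
      with quadratic[of "(a + 1) / (2 * c)"] True show False by simp
    qed
    then show ?thesis using a b by simp
  next
    case False
    with b have "0 < b" by simp
    have "0 \<le> a - 2 * (c / b) * c + (c / b)\<^sup>2 * b" by (rule quadratic)
    also have "\<dots> = a - c\<^sup>2 / b"
      using \<open>0 < b\<close> by (simp add: field_simps power2_eq_square)
    finally show ?thesis using \<open>0 < b\<close> by (simp add: field_simps mult.commute)
  qed
  then have "sqrt (c\<^sup>2) \<le> sqrt (a * b)" by (rule real_sqrt_le_mono)
  then show ?thesis by (simp add: a_def b_def c_def wnorm_def real_sqrt_mult)
qed

lemma wnorm_triangle:
  assumes "psd_symmetric M"
  shows "wnorm (u + v) M \<le> wnorm u M + wnorm v M"
proof -
  have sym: "v \<bullet> (M *v u) = u \<bullet> (M *v v)" and psd: "0 \<le> u \<bullet> (M *v u)" "0 \<le> v \<bullet> (M *v v)"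
    using assms by (auto simp: psd_symmetric_def)
  have "u \<bullet> (M *v v) \<le> wnorm u M * wnorm v M"
    using wnorm_cauchy_schwarz[OF assms, of u v] by simp
  then have "(u + v) \<bullet> (M *v (u + v)) \<le> (wnorm u M + wnorm v M)\<^sup>2"
    using sym psd by (simp add: wnorm_def matrix_vector_right_distrib inner_add_left
        inner_add_right power2_eq_square algebra_simps)
  then have "wnorm (u + v) M \<le> sqrt ((wnorm u M + wnorm v M)\<^sup>2)"
    unfolding wnorm_def by (rule real_sqrt_le_mono)
  also have "\<dots> = wnorm u M + wnorm v M"
    using psd by (simp add: wnorm_def)
  finally show ?thesis .
qed

lemma invertible_if_coercive:
  fixes M :: "real^'n^'n"
  assumes "0 < c" and coercive: "\<And>u. c * (u \<bullet> u) \<le> u \<bullet> (M *v u)"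
  shows "invertible M"
proof -
  have "inj ((*v) M)"
    unfolding vec.inj_iff_eq_0
  proof (intro allI impI)
    fix x assume "M *v x = 0"
    then have "c * (x \<bullet> x) \<le> 0" using coercive[of x] by simp
    with \<open>0 < c\<close> have "x \<bullet> x \<le> 0" by (simp add: mult_le_0_iff)
    then show "x = 0" by (metis inner_eq_zero_iff inner_ge_zero order_antisym)
  qed
  then show ?thesis
    using matrix_left_invertible_injective invertible_left_inverse by blast
qed

lemma matrix_inv_mult_vec:
  fixes M :: "real^'n^'n"
  assumes "invertible M"
  shows "M *v (matrix_inv M *v x) = x" and "matrix_inv M *v (M *v x) = x"
proof -
  have "M ** matrix_inv M = mat 1 \<and> matrix_inv M ** M = mat 1"
    using assms unfolding invertible_def matrix_inv_def by (rule someI_ex)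
  then show "M *v (matrix_inv M *v x) = x" and "matrix_inv M *v (M *v x) = x"
    by (metis matrix_vector_mul_assoc matrix_vector_mul_lid)+
qed

lemma wnorm_matrix_inv:
  assumes "invertible M"
  shows "wnorm (matrix_inv M *v f) M = wnorm f (matrix_inv M)"
  by (simp add: wnorm_def matrix_inv_mult_vec[OF assms] inner_commute)

lemma wnorm_scaled_matrix_inv_le:
  fixes M :: "real^'n^'n"
  assumes "0 < c" and coercive: "\<And>u. c * (u \<bullet> u) \<le> u \<bullet> (M *v u)"
  shows "wnorm (c *\<^sub>R (matrix_inv M *v x)) M \<le> sqrt c * norm x"
proof -
  define v where "v = matrix_inv M *v x"
  have Mv: "M *v v = x"
    unfolding v_def by (rule matrix_inv_mult_vec(1)[OF invertible_if_coercive[OF assms]])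
  have "c * (norm v)\<^sup>2 \<le> norm v * norm x"
    using coercive[of v] norm_cauchy_schwarz[of v x] by (simp add: Mv power2_norm_eq_inner)
  then have cv: "c * norm v \<le> norm x"
    by (cases "norm v = 0") (auto simp: power2_eq_square)
  have "(c *\<^sub>R v) \<bullet> (M *v (c *\<^sub>R v)) = c * c * (v \<bullet> x)"
    by (simp add: matrix_vector_mult_scaleR Mv)
  also have "\<dots> \<le> c * ((c * norm v) * norm x)"
    using \<open>0 < c\<close> norm_cauchy_schwarz[of v x] by (simp add: mult_left_mono)
  also have "\<dots> \<le> c * (norm x * norm x)"
    using \<open>0 < c\<close> cv by (intro mult_left_mono mult_right_mono) auto
  also have "\<dots> = (sqrt c * norm x)\<^sup>2"
    using \<open>0 < c\<close> by (simp add: power_mult_distrib power2_eq_square)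
  finally have "wnorm (c *\<^sub>R v) M \<le> sqrt ((sqrt c * norm x)\<^sup>2)"
    unfolding wnorm_def by (rule real_sqrt_le_mono)
  then show ?thesis using \<open>0 < c\<close> by (simp add: v_def)
qed

section \<open>Gram matrices of the exploration history\<close>

lemma outer_mult_vec: "outer x *v u = (x \<bullet> u) *\<^sub>R x"
  by (simp add: outer_def matrix_vector_mult_def inner_vec_def vec_eq_iff sum_distrib_left
      sum_distrib_right mult.commute mult.left_commute)

definition hist_feature ::
    "('s::finite \<Rightarrow> 'a \<Rightarrow> 's \<Rightarrow> real^'d) \<Rightarrow> nat \<Rightarrow> real \<Rightarrow> ('s,'a) traj list \<Rightarrow> nat \<Rightarrow> nat \<Rightarrow> real^'d" where
  "hist_feature phi H lam hs h t = phiK phi H (Lam phi H lam hs t h) (st hs t h) (ac hs t h)"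

lemma Gram_mult_vec:
  "Gram phi H lam hs h n *v u =
     lam *\<^sub>R u + (\<Sum>t\<in>{1..n}. (hist_feature phi H lam hs h t \<bullet> u) *\<^sub>R hist_feature phi H lam hs h t)"
proof (induction n)
  case 0
  then show ?case by (simp add: scaleR_matrix_vector_assoc[symmetric])
next
  case (Suc n)
  then show ?case
    by (simp add: matrix_vector_mult_add_rdistrib outer_mult_vec hist_feature_def Lam_def add.assoc)
qed

lemma Lam_quadratic_form:
  "v \<bullet> (Lam phi H lam hs k h *v u) =
     lam * (v \<bullet> u) + (\<Sum>t\<in>{1..<k}. (hist_feature phi H lam hs h t \<bullet> v) * (hist_feature phi H lam hs h t \<bullet> u))"
proof -
  have "{1..k - 1} = {1..<k}" by auto
  then show ?thesis
    by (simp add: Lam_def Gram_mult_vec inner_sum_right inner_add_right inner_commute mult.commute)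
qed

lemma Lam_psd_symmetric: "0 \<le> lam \<Longrightarrow> psd_symmetric (Lam phi H lam hs k h)"
  by (simp add: psd_symmetric_def Lam_quadratic_form sum_nonneg inner_commute mult.commute)

lemma Lam_coercive: "lam * (u \<bullet> u) \<le> u \<bullet> (Lam phi H lam hs k h *v u)"
  by (simp add: Lam_quadratic_form sum_nonneg)

lemma Lam_invertible: "0 < lam \<Longrightarrow> invertible (Lam phi H lam hs k h)"
  using invertible_if_coercive Lam_coercive by blast

lemma Gram_take: "Gram phi H lam (take n hs) h n = Gram phi H lam hs h n"
proof -
  have "Gram phi H lam (take n hs) h m = Gram phi H lam hs h m" if "m \<le> n" for m
    using that by (induction m) (simp_all add: st_def ac_def)
  then show ?thesis by simp
qed

section \<open>Value features\<close>

lemma featV_scaleR: "featV phi s a (\<lambda>s'. c * V s') = c *\<^sub>R featV phi s a V"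
  by (simp add: featV_def scaleR_sum_right)

lemma inner_featV: "x \<bullet> featV phi s a V = (\<Sum>s'\<in>UNIV. (x \<bullet> phi s a s') * V s')"
  by (simp add: featV_def inner_sum_right mult.commute)

lemma norm_featV_le:
  assumes feat: "\<forall>s a V. (\<forall>s'. 0 \<le> V s' \<and> V s' \<le> 1) \<longrightarrow> norm (featV phi s a V) \<le> 1"
    and H: "1 \<le> H" and V: "V \<in> Vset H"
  shows "norm (featV phi s a V) \<le> real H"
proof -
  have "\<forall>s'. 0 \<le> V s' / real H \<and> V s' / real H \<le> 1" using V H by (auto simp: Vset_def)
  then have "norm (featV phi s a (\<lambda>s'. (1 / real H) * V s')) \<le> 1" using feat by auto
  then have "norm ((1 / real H) *\<^sub>R featV phi s a V) \<le> 1" by (simp only: featV_scaleR)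
  then have "(1 / real H) * norm (featV phi s a V) \<le> 1" using H by simp
  then show ?thesis using H by (simp add: field_simps)
qed

text \<open>So \<open>Vsel\<close> is not a junk value of \<open>SOME\<close>: the weighted norm is continuous on the
  compact cube \<open>[0, H]\<^sup>S\<close>.\<close>

lemma Vsel_exists:
  fixes phi :: "'s::finite \<Rightarrow> 'a \<Rightarrow> 's \<Rightarrow> real^'d"
  shows "\<exists>V. V \<in> Vset H \<and>
     (\<forall>W\<in>Vset H. wnorm (featV phi s a W) (matrix_inv M) \<le> wnorm (featV phi s a V) (matrix_inv M))"
proof -
  define f where "f = (\<lambda>v::real^'s. wnorm (featV phi s a (\<lambda>s'. v $ s')) (matrix_inv M))"
  define C where "C = cbox (0::real^'s) (\<chi> i. real H)"
  have "continuous_on C f"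
    unfolding f_def wnorm_def featV_def matrix_vector_mult_def by (intro continuous_intros)
  moreover have "compact C" and "0 \<in> C"
    by (simp_all add: C_def mem_box_cart)
  ultimately obtain v where v: "v \<in> C" "\<forall>y\<in>C. f y \<le> f v"
    using continuous_attains_sup by (metis empty_iff)
  show ?thesis
  proof (intro exI conjI ballI)
    show "(\<lambda>s'. v $ s') \<in> Vset H" using v(1) by (auto simp: C_def Vset_def mem_box_cart)
    fix W :: "'s \<Rightarrow> real" assume "W \<in> Vset H"
    then have "((\<chi> s. W s)::real^'s) \<in> C" by (auto simp: C_def Vset_def mem_box_cart)
    from v(2)[rule_format, OF this]
    show "wnorm (featV phi s a W) (matrix_inv M) \<le> wnorm (featV phi s a (($) v)) (matrix_inv M)"
      by (simp add: f_def vec_lambda_inverse)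
  qed
qed

lemma Vsel_in_Vset: "Vsel phi H M s a \<in> Vset H"
  using someI_ex[OF Vsel_exists[of H phi s a M]] unfolding Vsel_def[symmetric] by blast

lemma wnorm_featV_le_phiK:
  "W \<in> Vset H \<Longrightarrow> wnorm (featV phi s a W) (matrix_inv M) \<le> wnorm (phiK phi H M s a) (matrix_inv M)"
  using someI_ex[OF Vsel_exists[of H phi s a M]] unfolding Vsel_def[symmetric] phiK_def by blast

lemma norm_hist_feature_le:
  assumes "\<forall>s a V. (\<forall>s'. 0 \<le> V s' \<and> V s' \<le> 1) \<longrightarrow> norm (featV phi s a V) \<le> 1" and "1 \<le> H"
  shows "norm (hist_feature phi H lam hs h t) \<le> real H"
  unfolding hist_feature_def phiK_def by (rule norm_featV_le[OF assms Vsel_in_Vset])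

section \<open>Values of policies under perturbed kernels\<close>

declare Vpi.simps [simp del] Vtstar.simps [simp del]

definition is_kernel :: "nat \<Rightarrow> (nat \<Rightarrow> 's::finite \<Rightarrow> 'a \<Rightarrow> 's \<Rightarrow> real) \<Rightarrow> bool" where
  "is_kernel H Q \<longleftrightarrow> (\<forall>h\<in>{1..H}. (\<forall>s a s'. 0 \<le> Q h s a s') \<and> (\<forall>s a. (\<Sum>s'\<in>UNIV. Q h s a s') = 1))"

definition unit_reward :: "nat \<Rightarrow> (nat \<Rightarrow> 's \<Rightarrow> 'a \<Rightarrow> real) \<Rightarrow> bool" where
  "unit_reward H R \<longleftrightarrow> (\<forall>h\<in>{1..H}. \<forall>s a. 0 \<le> R h s a \<and> R h s a \<le> 1)"

lemma Vpi_unfold: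
  "h \<le> H \<Longrightarrow> Vpi H Q \<pi> R h s = R h s (\<pi> h s) + (\<Sum>s'\<in>UNIV. Q h s (\<pi> h s) s' * Vpi H Q \<pi> R (Suc h) s')"
  by (subst Vpi.simps) simp

lemma Vpi_beyond: "H < h \<Longrightarrow> Vpi H Q \<pi> R h s = 0"
  by (subst Vpi.simps) simp

lemma Vtstar_beyond: "H < h \<Longrightarrow> Vtstar H Q R h s = 0"
  by (subst Vtstar.simps) simp

lemma Vtstar_ge:
  "h \<le> H \<Longrightarrow> min (R h s a + (\<Sum>s'\<in>UNIV. Q h s a s' * Vtstar H Q R (Suc h) s')) (real H) \<le> Vtstar H Q R h s"
  by (subst (2) Vtstar.simps) (auto intro!: Max_ge)

lemma kernel_mean_bounds:
  fixes q :: "'s::finite \<Rightarrow> real"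
  assumes "\<forall>s'. 0 \<le> q s'" and "(\<Sum>s'\<in>UNIV. q s') = 1" and "\<forall>s'. lo \<le> V s' \<and> V s' \<le> hi"
  shows "lo \<le> (\<Sum>s'\<in>UNIV. q s' * V s')" and "(\<Sum>s'\<in>UNIV. q s' * V s') \<le> hi"
proof -
  have "(\<Sum>s'\<in>UNIV. q s' * lo) \<le> (\<Sum>s'\<in>UNIV. q s' * V s')"
    using assms by (intro sum_mono mult_left_mono) auto
  then show "lo \<le> (\<Sum>s'\<in>UNIV. q s' * V s')" using assms(2) by (simp flip: sum_distrib_right)
  have "(\<Sum>s'\<in>UNIV. q s' * V s') \<le> (\<Sum>s'\<in>UNIV. q s' * hi)"
    using assms by (intro sum_mono mult_left_mono) auto
  then show "(\<Sum>s'\<in>UNIV. q s' * V s') \<le> hi" using assms(2) by (simp flip: sum_distrib_right)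
qed

lemma Vpi_bounds:
  assumes Q: "is_kernel H Q" and R: "unit_reward H R" and "1 \<le> h"
  shows "0 \<le> Vpi H Q \<pi> R h s \<and> Vpi H Q \<pi> R h s \<le> real (Suc H - h)"
  using \<open>1 \<le> h\<close>
proof (induction "Suc H - h" arbitrary: h s)
  case 0
  then show ?case by (simp add: Vpi_beyond)
next
  case (Suc k)
  then have "h \<le> H" by simp
  have IH: "\<forall>s'. 0 \<le> Vpi H Q \<pi> R (Suc h) s' \<and> Vpi H Q \<pi> R (Suc h) s' \<le> real (Suc H - Suc h)"
    using Suc.hyps(1)[of "Suc h"] Suc.hyps(2) by simp
  have "\<forall>s'. 0 \<le> Q h s (\<pi> h s) s'" "(\<Sum>s'\<in>UNIV. Q h s (\<pi> h s) s') = 1"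
    using Q \<open>h \<le> H\<close> Suc.prems by (auto simp: is_kernel_def)
  note mean = kernel_mean_bounds[OF this IH]
  have "0 \<le> R h s (\<pi> h s)" "R h s (\<pi> h s) \<le> 1"
    using R \<open>h \<le> H\<close> Suc.prems by (auto simp: unit_reward_def)
  with mean \<open>h \<le> H\<close> show ?case by (simp add: Vpi_unfold of_nat_diff)
qed

lemma Vpi_in_Vset:
  assumes "is_kernel H Q" and "unit_reward H R" and "1 \<le> h"
  shows "Vpi H Q \<pi> R h \<in> Vset H"
  unfolding Vset_def
proof (intro CollectI allI)
  fix s
  have "real (Suc H - h) \<le> real H" using \<open>1 \<le> h\<close> by simp
  with Vpi_bounds[OF assms, of \<pi> s] show "0 \<le> Vpi H Q \<pi> R h s \<and> Vpi H Q \<pi> R h s \<le> real H"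
    by linarith
qed

text \<open>The truncation at \<open>H\<close> in \<open>Vtstar\<close> costs nothing because values of policies lie in
  \<open>[0, H]\<close>.\<close>

lemma Vpi_simulation:
  fixes Q P :: "nat \<Rightarrow> 's::finite \<Rightarrow> 'a::finite \<Rightarrow> 's \<Rightarrow> real"
  assumes Q: "is_kernel H Q" and P: "is_kernel H P" and R: "unit_reward H R"
    and err: "\<forall>h\<in>{1..H}. \<forall>s a V. V \<in> Vset H \<longrightarrow>
        \<bar>(\<Sum>s'\<in>UNIV. Q h s a s' * V s') - (\<Sum>s'\<in>UNIV. P h s a s' * V s')\<bar> \<le> 2 * u h s a"
    and "1 \<le> h"
  shows "\<bar>Vpi H Q \<pi> R h s - Vpi H P \<pi> R h s\<bar> \<le> 2 * Vtstar H P u h s"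
  using \<open>1 \<le> h\<close>
proof (induction "Suc H - h" arbitrary: h s)
  case 0
  then show ?case by (simp add: Vpi_beyond Vtstar_beyond)
next
  case (Suc k)
  then have h: "h \<le> H" "1 \<le> h" by auto
  define a where "a = \<pi> h s"
  define V1 V2 W where "V1 = Vpi H Q \<pi> R (Suc h)" and "V2 = Vpi H P \<pi> R (Suc h)"
    and "W = Vtstar H P u (Suc h)"
  have IH: "\<bar>V1 s' - V2 s'\<bar> \<le> 2 * W s'" for s'
    using Suc by (simp add: V1_def V2_def W_def)
  have "V1 \<in> Vset H" unfolding V1_def by (rule Vpi_in_Vset[OF Q R]) simp
  then have model: "\<bar>(\<Sum>s'\<in>UNIV. Q h s a s' * V1 s') - (\<Sum>s'\<in>UNIV. P h s a s' * V1 s')\<bar> \<le> 2 * u h s a"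
    using err h by auto
  have "\<bar>(\<Sum>s'\<in>UNIV. P h s a s' * V1 s') - (\<Sum>s'\<in>UNIV. P h s a s' * V2 s')\<bar>
      = \<bar>\<Sum>s'\<in>UNIV. P h s a s' * (V1 s' - V2 s')\<bar>"
    by (simp add: sum_subtractf right_diff_distrib)
  also have "\<dots> \<le> (\<Sum>s'\<in>UNIV. P h s a s' * (2 * W s'))"
    using P h IH by (intro order_trans[OF sum_abs] sum_mono)
      (auto simp: is_kernel_def abs_mult intro: mult_left_mono)
  finally have propagated: "\<bar>(\<Sum>s'\<in>UNIV. P h s a s' * V1 s') - (\<Sum>s'\<in>UNIV. P h s a s' * V2 s')\<bar>
      \<le> 2 * (\<Sum>s'\<in>UNIV. P h s a s' * W s')"
    by (simp add: sum_distrib_left mult.left_commute)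
  have "\<bar>Vpi H Q \<pi> R h s - Vpi H P \<pi> R h s\<bar>
      = \<bar>(\<Sum>s'\<in>UNIV. Q h s a s' * V1 s') - (\<Sum>s'\<in>UNIV. P h s a s' * V2 s')\<bar>"
    by (simp add: Vpi_unfold[OF h(1)] a_def V1_def V2_def)
  also have "\<dots> \<le> 2 * (u h s a + (\<Sum>s'\<in>UNIV. P h s a s' * W s'))"
    using model propagated by (auto simp: abs_le_iff)
  finally have "\<bar>Vpi H Q \<pi> R h s - Vpi H P \<pi> R h s\<bar> \<le> 2 * (u h s a + (\<Sum>s'\<in>UNIV. P h s a s' * W s'))" .
  moreover have "\<bar>Vpi H Q \<pi> R h s - Vpi H P \<pi> R h s\<bar> \<le> real H"
    using Vpi_bounds[OF Q R h(2), of \<pi> s] Vpi_bounds[OF P R h(2), of \<pi> s] h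
    by (auto simp: abs_le_iff of_nat_diff)
  ultimately have "\<bar>Vpi H Q \<pi> R h s - Vpi H P \<pi> R h s\<bar> \<le> 2 * min (u h s a + (\<Sum>s'\<in>UNIV. P h s a s' * W s')) (real H)"
    by linarith
  also have "\<dots> \<le> 2 * Vtstar H P u h s"
    using Vtstar_ge[OF h(1), of u s a P] by (simp add: W_def)
  finally show ?case .
qed

text \<open>Planning in the model \<open>Q\<close> loses at most twice the simulation error, once for the
  optimal policy of \<open>P\<close> and once for the returned policy.\<close>

lemma suboptimality_le_Vtstar:
  fixes Q P :: "nat \<Rightarrow> 's::finite \<Rightarrow> 'a::finite \<Rightarrow> 's \<Rightarrow> real"
  assumes Q: "is_kernel H Q" and P: "is_kernel H P" and R: "unit_reward H R"
    and err: "\<forall>h\<in>{1..H}. \<forall>s a V. V \<in> Vset H \<longrightarrow>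
        \<bar>(\<Sum>s'\<in>UNIV. Q h s a s' * V s') - (\<Sum>s'\<in>UNIV. P h s a s' * V s')\<bar> \<le> 2 * u h s a"
    and opt: "Vstar H Q R 1 s1 - Vpi H Q \<pi> R 1 s1 \<le> eps"
  shows "Vstar H P R 1 s1 - Vpi H P \<pi> R 1 s1 \<le> 4 * Vtstar H P u 1 s1 + eps"
proof -
  have sim: "\<bar>Vpi H Q \<sigma> R 1 s1 - Vpi H P \<sigma> R 1 s1\<bar> \<le> 2 * Vtstar H P u 1 s1" for \<sigma>
    by (rule Vpi_simulation[OF Q P R err]) simp
  have bdd: "bdd_above (range (\<lambda>\<sigma>. Vpi H Q \<sigma> R 1 s1))"
    using Vpi_bounds[OF Q R, of 1] by (auto intro!: bdd_aboveI)
  have pointwise: "Vpi H P \<sigma> R 1 s1 \<le> Vstar H Q R 1 s1 + 2 * Vtstar H P u 1 s1" for \<sigma>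
  proof -
    have "Vpi H Q \<sigma> R 1 s1 \<le> Vstar H Q R 1 s1"
      unfolding Vstar_def by (rule cSup_upper[OF rangeI bdd])
    with sim[of \<sigma>] show ?thesis by (auto simp: abs_le_iff)
  qed
  have "Vstar H P R 1 s1 \<le> Vstar H Q R 1 s1 + 2 * Vtstar H P u 1 s1"
    unfolding Vstar_def[of H P] by (rule cSup_least) (blast intro: pointwise)+
  then show ?thesis using opt sim[of \<pi>] by linarith
qed

section \<open>Exponential supermartingales along the exploration\<close>

lemma gen_set_pmf:
  "\<tau> \<in> set_pmf (gen P \<pi> h n s) \<Longrightarrow> fst \<tau> ! 0 = s \<and> length (fst \<tau>) = Suc n \<and> length (snd \<tau>) = n"
proof (induction n arbitrary: h s \<tau>)
  case 0
  then show ?case by simp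
next
  case (Suc n)
  then obtain s' \<tau>' where "\<tau>' \<in> set_pmf (gen P \<pi> (Suc h) n s')" "\<tau> = (s # fst \<tau>', \<pi> h s # snd \<tau>')"
    by (auto split: prod.splits)
  with Suc.IH show ?case by auto
qed

lemma nn_integral_gen_transition_le_1:
  fixes g :: "'s \<Rightarrow> 'a \<Rightarrow> 's \<Rightarrow> ennreal"
  assumes "j < n" and "\<forall>s a. (\<integral>\<^sup>+s'. g s a s' \<partial>measure_pmf (P (h + j) s a)) \<le> 1"
  shows "(\<integral>\<^sup>+\<tau>. g (fst \<tau> ! j) (snd \<tau> ! j) (fst \<tau> ! Suc j) \<partial>measure_pmf (gen P \<pi> h n s)) \<le> 1"
  using assms
proof (induction n arbitrary: h j s)
  case 0
  then show ?case by simp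
next
  case (Suc m)
  define inner where "inner s' = (\<integral>\<^sup>+\<tau>. g ((s # fst \<tau>) ! j) ((\<pi> h s # snd \<tau>) ! j) ((s # fst \<tau>) ! Suc j)
           \<partial>measure_pmf (gen P \<pi> (Suc h) m s'))" for s'
  have "(\<integral>\<^sup>+\<tau>. g (fst \<tau> ! j) (snd \<tau> ! j) (fst \<tau> ! Suc j) \<partial>measure_pmf (gen P \<pi> h (Suc m) s))
     = (\<integral>\<^sup>+s'. inner s' \<partial>measure_pmf (P h s (\<pi> h s)))"
    by (simp add: inner_def nn_integral_bind_pmf nn_integral_map_pmf split_beta)
  also have "\<dots> \<le> 1"
  proof (cases j)
    case 0
    have "inner s' = g s (\<pi> h s) s'" for s'
    proof -
      have "inner s' = (\<integral>\<^sup>+\<tau>. g s (\<pi> h s) s' \<partial>measure_pmf (gen P \<pi> (Suc h) m s'))"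
        unfolding inner_def using 0 by (intro nn_integral_cong_AE AE_pmfI) (simp add: gen_set_pmf)
      then show ?thesis by (simp add: measure_pmf.emeasure_space_1)
    qed
    then show ?thesis using Suc.prems(2) 0 by simp
  next
    case (Suc j')
    have "inner s' \<le> 1" for s'
      using Suc.IH[of j' "Suc h" s'] Suc.prems Suc by (simp add: inner_def)
    then have "(\<integral>\<^sup>+s'. inner s' \<partial>measure_pmf (P h s (\<pi> h s))) \<le> (\<integral>\<^sup>+s'. 1 \<partial>measure_pmf (P h s (\<pi> h s)))"
      by (intro nn_integral_mono) auto
    then show ?thesis by (simp add: measure_pmf.emeasure_space_1)
  qed
  finally show ?case .
qed

definition episode_sum :: "(('s,'a) traj list \<Rightarrow> ('s,'a) traj \<Rightarrow> real) \<Rightarrow> ('s,'a) traj list \<Rightarrow> real" where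
  "episode_sum \<Psi> hs = (\<Sum>t<length hs. \<Psi> (take t hs) (hs ! t))"

lemma episode_sum_snoc: "episode_sum \<Psi> (hs @ [\<tau>]) = episode_sum \<Psi> hs + \<Psi> hs \<tau>"
  unfolding episode_sum_def by (simp add: nth_append)

lemma length_explore:
  "hs \<in> set_pmf (explore P s1 H pol n hs0) \<Longrightarrow> length hs = length hs0 + n"
proof (induction n arbitrary: hs0)
  case 0
  then show ?case by simp
next
  case (Suc n)
  then obtain \<tau> where "hs \<in> set_pmf (explore P s1 H pol n (hs0 @ [\<tau>]))" by auto
  from Suc.IH[OF this] show ?case by simp
qed

lemma nn_integral_exp_episode_sum_explore:
  assumes "\<forall>hs. (\<integral>\<^sup>+\<tau>. exp (\<Psi> hs \<tau>) \<partial>measure_pmf (gen P (pol hs) 1 H s1)) \<le> 1"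
  shows "(\<integral>\<^sup>+hs. exp (episode_sum \<Psi> hs) \<partial>measure_pmf (explore P s1 H pol n hs0))
    \<le> exp (episode_sum \<Psi> hs0)"
proof (induction n arbitrary: hs0)
  case 0
  then show ?case by simp
next
  case (Suc n)
  let ?gen = "measure_pmf (gen P (pol hs0) 1 H s1)"
  have "(\<integral>\<^sup>+hs. exp (episode_sum \<Psi> hs) \<partial>measure_pmf (explore P s1 H pol (Suc n) hs0))
      = (\<integral>\<^sup>+\<tau>. (\<integral>\<^sup>+hs. exp (episode_sum \<Psi> hs) \<partial>measure_pmf (explore P s1 H pol n (hs0 @ [\<tau>]))) \<partial>?gen)"
    by (simp add: nn_integral_bind_pmf)
  also have "\<dots> \<le> (\<integral>\<^sup>+\<tau>. ennreal (exp (episode_sum \<Psi> hs0)) * exp (\<Psi> hs0 \<tau>) \<partial>?gen)"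
  proof (intro nn_integral_mono)
    fix \<tau>
    have "ennreal (exp (episode_sum \<Psi> (hs0 @ [\<tau>]))) = ennreal (exp (episode_sum \<Psi> hs0)) * exp (\<Psi> hs0 \<tau>)"
      by (simp add: episode_sum_snoc exp_add ennreal_mult)
    with Suc.IH[of "hs0 @ [\<tau>]"]
    show "(\<integral>\<^sup>+hs. exp (episode_sum \<Psi> hs) \<partial>measure_pmf (explore P s1 H pol n (hs0 @ [\<tau>])))
        \<le> ennreal (exp (episode_sum \<Psi> hs0)) * exp (\<Psi> hs0 \<tau>)"
      by simp
  qed
  also have "\<dots> = ennreal (exp (episode_sum \<Psi> hs0)) * (\<integral>\<^sup>+\<tau>. exp (\<Psi> hs0 \<tau>) \<partial>?gen)"
    by (simp add: nn_integral_cmult)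
  also have "\<dots> \<le> exp (episode_sum \<Psi> hs0)"
    using assms mult_left_mono[of _ 1 "ennreal (exp (episode_sum \<Psi> hs0))"] by simp
  finally show ?case .
qed

lemma prob_episode_sum_ge_le:
  assumes "\<forall>hs. (\<integral>\<^sup>+\<tau>. exp (\<Psi> hs \<tau>) \<partial>measure_pmf (gen P (pol hs) 1 H s1)) \<le> 1"
  shows "measure_pmf.prob (explore P s1 H pol n []) {hs. L \<le> episode_sum \<Psi> hs} \<le> exp (- L)"
proof -
  let ?M = "measure_pmf (explore P s1 H pol n [])"
  have "indicator {hs. L \<le> episode_sum \<Psi> hs} hs \<le> ennreal (exp (- L)) * exp (episode_sum \<Psi> hs)" for hs
  proof (cases "L \<le> episode_sum \<Psi> hs")
    case True
    then have "1 \<le> exp (- L) * exp (episode_sum \<Psi> hs)" by (simp add: exp_add[symmetric])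
    then show ?thesis using True by (simp add: ennreal_mult'[symmetric] ennreal_leI)
  qed simp
  then have "emeasure ?M {hs. L \<le> episode_sum \<Psi> hs} \<le> (\<integral>\<^sup>+hs. ennreal (exp (- L)) * exp (episode_sum \<Psi> hs) \<partial>?M)"
    by (simp add: nn_integral_mono flip: nn_integral_indicator)
  also have "\<dots> = ennreal (exp (- L)) * (\<integral>\<^sup>+hs. exp (episode_sum \<Psi> hs) \<partial>?M)"
    by (simp add: nn_integral_cmult)
  also have "\<dots> \<le> ennreal (exp (- L)) * exp (episode_sum \<Psi> [])"
    using nn_integral_exp_episode_sum_explore[OF assms] by (intro mult_left_mono) auto
  also have "\<dots> = ennreal (exp (- L))" by (simp add: episode_sum_def)
  finally show ?thesis by (simp add: measure_pmf.emeasure_eq_measure ennreal_le_iff)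
qed

text \<open>Hoeffding's lemma; the library version needs \<open>c > 0\<close>, so \<open>c < 0\<close> goes through \<open>-V\<close>.\<close>

lemma nn_integral_exp_centered_le_1:
  fixes p :: "'s::finite pmf"
  assumes V: "\<forall>s'. 0 \<le> V s' \<and> V s' \<le> real H" and m: "m = (\<Sum>x\<in>UNIV. pmf p x * V x)"
  shows "(\<integral>\<^sup>+s'. exp (c * (V s' - m) - (real H)\<^sup>2 / 8 * c\<^sup>2) \<partial>measure_pmf p) \<le> 1"
proof -
  have hoeffding: "(\<integral>\<^sup>+s'. exp (l * (W s' - (\<Sum>x\<in>UNIV. pmf p x * W x))) \<partial>measure_pmf p)
      \<le> exp (l\<^sup>2 * (real H)\<^sup>2 / 8)"
    if W: "\<forall>s'. lo \<le> W s' \<and> W s' \<le> lo + real H" and "0 < l" for W lo l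
  proof -
    interpret interval_bounded_random_variable "measure_pmf p" W lo "lo + real H"
      by unfold_locales (use W in auto)
    have "measure_pmf.expectation p W = (\<Sum>x\<in>UNIV. pmf p x * W x)"
      by (subst integral_measure_pmf_real[of UNIV]) (auto simp: mult.commute)
    then show ?thesis using Hoeffdings_lemma_nn_integral[OF \<open>0 < l\<close>] by simp
  qed
  have mgf: "(\<integral>\<^sup>+s'. exp (c * (V s' - m)) \<partial>measure_pmf p) \<le> exp (c\<^sup>2 * (real H)\<^sup>2 / 8)"
  proof (cases c "0::real" rule: linorder_cases)
    case less
    have "\<forall>s'. - real H \<le> - V s' \<and> - V s' \<le> - real H + real H" using V by auto
    from hoeffding[OF this, where l = "- c"] less show ?thesis
      by (simp add: m sum_negf algebra_simps)
  next
    case equal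
    then show ?thesis by (simp add: measure_pmf.emeasure_space_1)
  next
    case greater
    from hoeffding[where W = V and lo = 0 and l = c] V greater show ?thesis by (simp add: m)
  qed
  have split: "ennreal (exp (c * (V s' - m) - (real H)\<^sup>2 / 8 * c\<^sup>2))
      = ennreal (exp (- ((real H)\<^sup>2 / 8 * c\<^sup>2))) * exp (c * (V s' - m))" for s'
    by (subst ennreal_mult'[symmetric]) (simp_all add: exp_add[symmetric])
  have "(\<integral>\<^sup>+s'. exp (c * (V s' - m) - (real H)\<^sup>2 / 8 * c\<^sup>2) \<partial>measure_pmf p)
      = ennreal (exp (- ((real H)\<^sup>2 / 8 * c\<^sup>2))) * (\<integral>\<^sup>+s'. exp (c * (V s' - m)) \<partial>measure_pmf p)"
    unfolding split by (rule nn_integral_cmult) simp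
  also have "\<dots> \<le> ennreal (exp (- ((real H)\<^sup>2 / 8 * c\<^sup>2))) * exp (c\<^sup>2 * (real H)\<^sup>2 / 8)"
    by (intro mult_left_mono mgf) auto
  also have "\<dots> = 1"
    by (simp add: exp_add[symmetric] flip: ennreal_mult')
  finally show ?thesis .
qed

section \<open>A finite net of a cube\<close>

definition grid :: "real \<Rightarrow> nat \<Rightarrow> real set" where
  "grid eps J = (\<lambda>j. eps * of_int j) ` {- int J..int J}"

definition cube_grid :: "real \<Rightarrow> nat \<Rightarrow> (real^'d) set" where
  "cube_grid eps J = {z. \<forall>i. z $ i \<in> grid eps J}"

lemma cube_grid_eq_image: "cube_grid eps J = (\<lambda>f. \<chi> i. f i) ` (PiE UNIV (\<lambda>_. grid eps J))"
proof (intro set_eqI iffI)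
  fix z :: "real^'d" assume "z \<in> cube_grid eps J"
  then have "(\<lambda>i. z $ i) \<in> PiE UNIV (\<lambda>_. grid eps J)" by (auto simp: cube_grid_def)
  then show "z \<in> (\<lambda>f. \<chi> i. f i) ` (PiE UNIV (\<lambda>_. grid eps J))" by force
qed (auto simp: cube_grid_def PiE_def Pi_def)

lemma finite_cube_grid: "finite (cube_grid eps J :: (real^'d) set)"
  unfolding cube_grid_eq_image by (intro finite_imageI finite_PiE) (simp_all add: grid_def)

lemma card_cube_grid_le: "card (cube_grid eps J :: (real^'d) set) \<le> (2 * J + 1) ^ CARD('d)"
proof -
  have "card (grid eps J) \<le> card {- int J..int J}" unfolding grid_def by (rule card_image_le) simp
  then have "card (grid eps J) \<le> 2 * J + 1" by simp
  have "card (cube_grid eps J :: (real^'d) set) \<le> card (PiE (UNIV::'d set) (\<lambda>_. grid eps J))"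
    unfolding cube_grid_eq_image by (rule card_image_le) (simp add: finite_PiE grid_def)
  also have "\<dots> = card (grid eps J) ^ CARD('d)" by (simp add: card_PiE)
  also have "\<dots> \<le> (2 * J + 1) ^ CARD('d)" by (rule power_mono) (fact, simp)
  finally show ?thesis .
qed

lemma card_cube_grid_pos: "0 < card (cube_grid eps J :: (real^'d) set)"
proof -
  have "(0::real^'d) \<in> cube_grid eps J"
    by (auto simp: cube_grid_def grid_def image_iff intro!: bexI[of _ 0])
  then show ?thesis using finite_cube_grid card_gt_0_iff by blast
qed

lemma round_in_range:
  assumes "\<bar>x\<bar> \<le> real J"
  shows "round x \<in> {- int J..int J}"
  using assms unfolding round_def by (auto, linarith+)

lemma cube_grid_approx:
  fixes w :: "real^'d"
  assumes "0 < eps" and "norm w \<le> real J * eps"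
  shows "\<exists>z\<in>cube_grid eps J. (z - w) \<bullet> (z - w) \<le> real CARD('d) * eps\<^sup>2 / 4"
proof -
  define z where "z = (\<chi> i. eps * of_int (round (w $ i / eps)) :: real^'d)"
  have "z $ i \<in> grid eps J" for i
  proof -
    have "\<bar>w $ i\<bar> \<le> real J * eps" using component_le_norm_cart[of w i] assms(2) by linarith
    then have "\<bar>w $ i / eps\<bar> \<le> real J" using \<open>0 < eps\<close> by (simp add: abs_div pos_divide_le_eq)
    from round_in_range[OF this] show ?thesis by (auto simp: z_def grid_def)
  qed
  then have "z \<in> cube_grid eps J" by (simp add: cube_grid_def)
  have "(z $ i - w $ i)\<^sup>2 \<le> eps\<^sup>2 / 4" for i
  proof -
    have "\<bar>of_int (round (w $ i / eps)) - w $ i / eps\<bar> \<le> 1/2" by (rule of_int_round_abs_le)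
    then have "\<bar>eps * (of_int (round (w $ i / eps)) - w $ i / eps)\<bar> \<le> eps * (1/2)"
      using \<open>0 < eps\<close> by (simp add: abs_mult)
    then have "\<bar>z $ i - w $ i\<bar> \<le> eps / 2" using \<open>0 < eps\<close> by (simp add: z_def algebra_simps)
    then have "\<bar>z $ i - w $ i\<bar>\<^sup>2 \<le> (eps / 2)\<^sup>2" by (intro power_mono) auto
    then show ?thesis by (simp add: power_divide)
  qed
  then have "(z - w) \<bullet> (z - w) \<le> (\<Sum>i\<in>(UNIV::'d set). eps\<^sup>2 / 4)"
    unfolding inner_vec_def by (intro sum_mono) (simp add: power2_eq_square)
  with \<open>z \<in> cube_grid eps J\<close> show ?thesis by auto
qed

lemma ln_confidence_ge_1:
  fixes H K :: nat and lam delta :: real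
  assumes "1 \<le> H" "1 \<le> K" "0 < lam" "lam \<le> 1" "0 < delta" "delta < 1"
  shows "1 \<le> ln (4 * real H ^ 3 * real K / lam / delta)"
proof -
  have "1 \<le> real H ^ 3 * real K" using assms by (simp add: mult_ge1_I)
  moreover have "1 \<le> 1 / lam / delta" using assms by (simp add: field_simps mult_le_one)
  ultimately have "1 \<le> real H ^ 3 * real K * (1 / lam / delta)" by (rule mult_ge1_I)
  then have "(4::real) \<le> 4 * real H ^ 3 * real K / lam / delta" by simp
  then have "ln 4 \<le> ln (4 * real H ^ 3 * real K / lam / delta)" by simp
  moreover have "1 \<le> ln (4::real)" using exp_le by (simp add: ln_ge_iff)
  ultimately show ?thesis by linarith
qed

lemma net_radius_bound:
  fixes H K :: nat and lam :: real
  assumes "1 \<le> H" "1 \<le> K" "0 < lam"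
  shows "real (K - 1) * (real H)\<^sup>2 / lam \<le> real (nat \<lceil>real K ^ 2 * real H ^ 3 / lam\<rceil>) * (1 / (real K * real H))"
proof -
  have "real (K - 1) * (real H)\<^sup>2 / lam \<le> real K * (real H)\<^sup>2 / lam"
    using assms by (intro divide_right_mono mult_right_mono) auto
  also have "\<dots> = (real K ^ 2 * real H ^ 3 / lam) * (1 / (real K * real H))"
    using assms by (simp add: field_simps power2_eq_square power3_eq_cube)
  also have "\<dots> \<le> real (nat \<lceil>real K ^ 2 * real H ^ 3 / lam\<rceil>) * (1 / (real K * real H))"
    by (intro mult_right_mono) (linarith, simp)
  finally show ?thesis .
qed

lemma net_error_bound:
  fixes H K d :: nat and lam :: real
  assumes "1 \<le> H" "1 \<le> K" "lam \<le> 1" "real d \<le> real K"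
  shows "(lam + real (K - 1) * (real H)\<^sup>2) * (real d * (1 / (real K * real H))\<^sup>2 / 4) \<le> 1 / 2"
proof -
  have "lam + real (K - 1) * (real H)\<^sup>2 \<le> 2 * real K * (real H)\<^sup>2"
  proof -
    have "1 \<le> real K * (real H)\<^sup>2" using assms by (simp add: mult_ge1_I)
    moreover have "real (K - 1) * (real H)\<^sup>2 \<le> real K * (real H)\<^sup>2" by (intro mult_right_mono) auto
    ultimately show ?thesis using assms by linarith
  qed
  moreover have "real d * (1 / (real K * real H))\<^sup>2 / 4 \<le> real K * (1 / (real K * real H))\<^sup>2 / 4"
    using assms by (intro divide_right_mono mult_right_mono) auto
  ultimately have "(lam + real (K - 1) * (real H)\<^sup>2) * (real d * (1 / (real K * real H))\<^sup>2 / 4)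
      \<le> (2 * real K * (real H)\<^sup>2) * (real K * (1 / (real K * real H))\<^sup>2 / 4)"
    by (intro mult_mono) auto
  also have "\<dots> = 1 / 2" using assms by (simp add: field_simps power2_eq_square)
  finally show ?thesis .
qed

text \<open>With \<open>X = 4 H\<^sup>3 K / (\<lambda> \<delta>)\<close>, the net size satisfies \<open>e H C / \<delta> \<le> Y A\<^sup>d \<le> (A Y)\<^sup>d = X\<^sup>2\<^sup>d\<close>
  where \<open>A = 5 K\<^sup>2 H\<^sup>3 / \<lambda> \<ge> 2 J + 1\<close> and \<open>Y = X\<^sup>2 / A \<ge> e H / \<delta>\<close>.\<close>

lemma net_log_card_bound:
  fixes H K d C J :: nat and lam delta :: real
  assumes H: "1 \<le> H" and K: "1 \<le> K" and d: "1 \<le> d" and lam: "0 < lam" "lam \<le> 1"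
    and delta: "0 < delta" "delta < 1" and C: "1 \<le> C" "C \<le> (2 * J + 1) ^ d"
    and J: "J = nat \<lceil>real K ^ 2 * real H ^ 3 / lam\<rceil>"
  shows "ln (real H * real C / delta) + 1 \<le> 2 * real d * ln (4 * real H ^ 3 * real K / lam / delta)"
proof -
  define A where "A = 5 * real K ^ 2 * real H ^ 3 / lam"
  define X where "X = 4 * real H ^ 3 * real K / lam / delta"
  define Y where "Y = 16 * real H ^ 3 / (5 * lam * delta ^ 2)"
  have "1 \<le> real K ^ 2 * real H ^ 3" using H K by (simp add: mult_ge1_I)
  then have KH: "1 \<le> real K ^ 2 * real H ^ 3 / lam" using lam by (simp add: le_divide_eq)
  have "real J \<le> real K ^ 2 * real H ^ 3 / lam + 1"
    unfolding J using KH of_int_ceiling_le_add_one[of "real K ^ 2 * real H ^ 3 / lam"] by simp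
  then have "real (2 * J + 1) \<le> A" using KH unfolding A_def by simp
  then have CA: "real C \<le> A ^ d"
    using C(2) by (metis of_nat_le_iff of_nat_power of_nat_0_le_iff power_mono order_trans)
  have "A > 0" "X > 0" using lam H K delta by (simp_all add: A_def X_def)
  have XY: "X\<^sup>2 = A * Y" using lam delta H K
    by (simp add: A_def X_def Y_def field_simps power2_eq_square power3_eq_cube)
  have eY: "exp 1 * real H / delta \<le> Y"
  proof -
    have "lam * delta \<le> 1" using lam delta by (intro mult_le_one) auto
    then have "15 * real H * (lam * delta) \<le> 15 * real H" by (intro mult_left_le) auto
    moreover have "real H \<le> real H ^ 3" using H power_increasing[of 1 3 "real H"] by simp
    ultimately have "15 * real H * (lam * delta) \<le> 16 * real H ^ 3"
      using of_nat_0_le_iff[of H] by linarith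
    then have "3 * real H / delta \<le> Y"
      using lam delta by (simp add: Y_def field_simps power2_eq_square)
    moreover have "exp 1 * real H / delta \<le> 3 * real H / delta"
      using exp_le delta H by (intro divide_right_mono mult_right_mono) auto
    ultimately show ?thesis by linarith
  qed
  have "1 \<le> exp 1 * (real H / delta)"
    using H delta by (intro mult_ge1_I) (simp_all add: le_divide_eq)
  then have "1 \<le> Y" using eY by simp
  have "exp 1 * (real H * real C / delta) \<le> exp 1 * real H / delta * A ^ d"
    using CA delta H by (simp add: field_simps mult_left_mono)
  also have "\<dots> \<le> Y * A ^ d" using eY \<open>A > 0\<close> by (intro mult_right_mono) auto
  also have "\<dots> \<le> Y ^ d * A ^ d"
    using \<open>1 \<le> Y\<close> \<open>A > 0\<close> d power_increasing[of 1 d Y] by (auto intro: mult_right_mono)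
  also have "\<dots> = (A * Y) ^ d" by (simp add: power_mult_distrib mult.commute)
  also have "\<dots> = X ^ (2 * d)" by (simp only: XY[symmetric] power_mult)
  finally have "exp 1 * (real H * real C / delta) \<le> X ^ (2 * d)" .
  then have "ln (exp 1 * (real H * real C / delta)) \<le> ln (X ^ (2 * d))"
    using H C delta \<open>X > 0\<close> by simp
  moreover have "ln (exp 1 * (real H * real C / delta)) = ln (real H * real C / delta) + 1"
    using H C delta by (subst ln_mult) auto
  moreover have "ln (X ^ (2 * d)) = 2 * real d * ln X" using \<open>X > 0\<close> by (simp add: ln_realpow)
  ultimately show ?thesis by (simp add: X_def)
qed

section \<open>Confidence sets for the exploration data\<close>

locale linear_mixture_exploration =
  fixes phi :: "'s::finite \<Rightarrow> 'a::finite \<Rightarrow> 's \<Rightarrow> real^'d"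
    and H :: nat and lam :: real and theta :: "nat \<Rightarrow> real^'d"
    and P :: "nat \<Rightarrow> 's \<Rightarrow> 'a \<Rightarrow> 's pmf" and K :: nat
  assumes H: "1 \<le> H" and K: "1 \<le> K" and lam: "0 < lam"
    and feat: "\<forall>s a V. (\<forall>s'. 0 \<le> V s' \<and> V s' \<le> 1) \<longrightarrow> norm (featV phi s a V) \<le> 1"
    and P_lin: "\<forall>h\<in>{1..H}. \<forall>s a s'. pmf (P h s a) s' = theta h \<bullet> phi s a s'"
begin

abbreviation LamK :: "('s,'a) traj list \<Rightarrow> nat \<Rightarrow> real^'d^'d" where
  "LamK hs h \<equiv> Lam phi H lam hs K h"

abbreviation ph :: "('s,'a) traj list \<Rightarrow> nat \<Rightarrow> nat \<Rightarrow> real^'d" where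
  "ph hs h t \<equiv> hist_feature phi H lam hs h t"

definition noise :: "('s,'a) traj list \<Rightarrow> nat \<Rightarrow> nat \<Rightarrow> real" where
  "noise hs h t = Vsel phi H (Lam phi H lam hs t h) (st hs t h) (ac hs t h) (st hs t (Suc h))
     - theta h \<bullet> ph hs h t"

definition noise_sum :: "('s,'a) traj list \<Rightarrow> nat \<Rightarrow> real^'d" where
  "noise_sum hs h = (\<Sum>t\<in>{1..<K}. noise hs h t *\<^sub>R ph hs h t)"

definition ridge_noise :: "('s,'a) traj list \<Rightarrow> nat \<Rightarrow> real^'d" where
  "ridge_noise hs h = matrix_inv (LamK hs h) *v noise_sum hs h"

lemma kernel_mean_featV:
  "h \<in> {1..H} \<Longrightarrow> theta h \<bullet> featV phi s a V = (\<Sum>s'\<in>UNIV. pmf (P h s a) s' * V s')"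
  using P_lin by (simp add: inner_featV)

lemma theta_norm_ge_1:
  assumes h: "h \<in> {1..H}"
  shows "1 \<le> norm (theta h)"
proof -
  fix s :: 's and a :: 'a
  have "1 = (\<Sum>s'\<in>UNIV. pmf (P h s a) s' * 1)" by (simp add: sum_pmf_eq_1)
  also have "\<dots> = theta h \<bullet> featV phi s a (\<lambda>_. 1)" by (simp add: kernel_mean_featV[OF h])
  also have "\<dots> \<le> norm (theta h) * norm (featV phi s a (\<lambda>_. 1))" by (rule norm_cauchy_schwarz)
  also have "\<dots> \<le> norm (theta h)" using feat by (intro mult_left_le) auto
  finally show ?thesis .
qed

lemma noise_abs_le:
  assumes h: "h \<in> {1..H}"
  shows "\<bar>noise hs h t\<bar> \<le> real H"
proof -
  define V where "V = Vsel phi H (Lam phi H lam hs t h) (st hs t h) (ac hs t h)"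
  have V_range: "\<forall>s'. 0 \<le> V s' \<and> V s' \<le> real H"
    using Vsel_in_Vset[of phi H "Lam phi H lam hs t h" "st hs t h" "ac hs t h"]
    by (simp add: V_def Vset_def)
  have mean: "theta h \<bullet> ph hs h t = (\<Sum>s'\<in>UNIV. pmf (P h (st hs t h) (ac hs t h)) s' * V s')"
    unfolding hist_feature_def phiK_def V_def by (rule kernel_mean_featV[OF h])
  have "0 \<le> theta h \<bullet> ph hs h t" "theta h \<bullet> ph hs h t \<le> real H"
    unfolding mean by (rule kernel_mean_bounds[OF _ sum_pmf_eq_1 V_range]; simp)+
  with V_range[rule_format, of "st hs t (Suc h)"] show ?thesis
    by (simp add: noise_def V_def[symmetric] abs_le_iff)
qed

lemma norm_noise_sum_le:
  assumes h: "h \<in> {1..H}"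
  shows "norm (noise_sum hs h) \<le> real (K - 1) * (real H)\<^sup>2"
proof -
  have "norm (noise_sum hs h) \<le> (\<Sum>t\<in>{1..<K}. norm (noise hs h t *\<^sub>R ph hs h t))"
    unfolding noise_sum_def by (rule norm_sum)
  also have "\<dots> \<le> (\<Sum>t\<in>{1..<K}. real H * real H)"
    by (intro sum_mono) (auto intro!: mult_mono noise_abs_le[OF h] norm_hist_feature_le[OF feat H])
  finally show ?thesis by (simp add: power2_eq_square)
qed

lemma LamK_ridge_noise: "LamK hs h *v ridge_noise hs h = noise_sum hs h"
  unfolding ridge_noise_def by (rule matrix_inv_mult_vec(1)[OF Lam_invertible[OF lam]])

lemma norm_ridge_noise_le: "norm (ridge_noise hs h) \<le> norm (noise_sum hs h) / lam"
proof -
  have "lam * (norm (ridge_noise hs h))\<^sup>2 \<le> norm (ridge_noise hs h) * norm (noise_sum hs h)"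
    using Lam_coercive[of lam "ridge_noise hs h" phi H hs K h] norm_cauchy_schwarz[of "ridge_noise hs h" "noise_sum hs h"]
    by (simp add: LamK_ridge_noise power2_norm_eq_inner)
  then have "lam * norm (ridge_noise hs h) \<le> norm (noise_sum hs h)"
    by (cases "norm (ridge_noise hs h) = 0") (auto simp: power2_eq_square)
  then show ?thesis using lam by (simp add: field_simps)
qed

lemma thetahat_minus_theta:
  "thetahat phi H lam hs K h - theta h = ridge_noise hs h - lam *\<^sub>R (matrix_inv (LamK hs h) *v theta h)"
proof -
  note inv = matrix_inv_mult_vec[OF Lam_invertible[OF lam]]
  define Y where "Y = (\<Sum>t\<in>{1..<K}.
     Vsel phi H (Lam phi H lam hs t h) (st hs t h) (ac hs t h) (st hs t (Suc h)) *\<^sub>R ph hs h t)"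
  have "LamK hs h *v theta h = lam *\<^sub>R theta h + (\<Sum>t\<in>{1..<K}. (ph hs h t \<bullet> theta h) *\<^sub>R ph hs h t)"
  proof -
    have "{1..K - 1} = {1..<K}" by auto
    then show ?thesis by (simp add: Lam_def Gram_mult_vec)
  qed
  then have "Y - LamK hs h *v theta h = noise_sum hs h - lam *\<^sub>R theta h"
    by (simp add: Y_def noise_sum_def noise_def scaleR_diff_left sum_subtractf inner_commute algebra_simps)
  then have "matrix_inv (LamK hs h) *v Y - theta h = ridge_noise hs h - lam *\<^sub>R (matrix_inv (LamK hs h) *v theta h)"
    by (metis ridge_noise_def inv(2) matrix_vector_mult_diff_distrib matrix_vector_mult_scaleR)
  moreover have "thetahat phi H lam hs K h = matrix_inv (LamK hs h) *v Y"
    by (simp add: thetahat_def Y_def hist_feature_def)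
  ultimately show ?thesis by simp
qed

lemma thetahat_error_le:
  "wnorm (thetahat phi H lam hs K h - theta h) (LamK hs h)
     \<le> sqrt (ridge_noise hs h \<bullet> noise_sum hs h) + sqrt lam * norm (theta h)"
proof -
  have "wnorm (thetahat phi H lam hs K h - theta h) (LamK hs h)
      = wnorm (ridge_noise hs h + - (lam *\<^sub>R (matrix_inv (LamK hs h) *v theta h))) (LamK hs h)"
    by (simp add: thetahat_minus_theta)
  also have "\<dots> \<le> wnorm (ridge_noise hs h) (LamK hs h)
      + wnorm (- (lam *\<^sub>R (matrix_inv (LamK hs h) *v theta h))) (LamK hs h)"
    by (rule wnorm_triangle[OF Lam_psd_symmetric]) (use lam in simp)
  also have "\<dots> \<le> sqrt (ridge_noise hs h \<bullet> noise_sum hs h) + sqrt lam * norm (theta h)"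
    using wnorm_scaled_matrix_inv_le[OF lam Lam_coercive, of phi H hs K h "theta h"]
    by (simp add: wnorm_def[of "ridge_noise hs h"] LamK_ridge_noise)
  finally show ?thesis .
qed

text \<open>Both \<open>thetat\<close> and \<open>theta h\<close> lie within \<open>beta\<close> of \<open>thetahat\<close>, and by the choice of
  \<open>Vsel\<close> the feature of any \<open>V \<in> Vset H\<close> is dominated by \<open>phiK\<close> in the \<open>\<Lambda>\<^sup>-\<^sup>1\<close>-norm.\<close>

lemma model_error_le_bonus:
  assumes h: "h \<in> {1..H}" and V: "V \<in> Vset H"
    and thetat: "wnorm (thetat - thetahat phi H lam hs K h) (LamK hs h) \<le> beta"
    and conf: "wnorm (thetahat phi H lam hs K h - theta h) (LamK hs h) \<le> beta"
  shows "\<bar>(\<Sum>s'\<in>UNIV. (thetat \<bullet> phi s a s') * V s') - (\<Sum>s'\<in>UNIV. pmf (P h s a) s' * V s')\<bar>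
          \<le> 2 * bonus phi H lam beta hs K h s a"
proof -
  define G where "G = LamK hs h"
  define f where "f = featV phi s a V"
  define u where "u = matrix_inv G *v f"
  have psd: "psd_symmetric G" using lam by (simp add: G_def Lam_psd_symmetric)
  have "0 \<le> beta"
    using thetat wnorm_nonneg[OF psd, of "thetat - thetahat phi H lam hs K h"] by (simp add: G_def)
  have Gu: "G *v u = f" unfolding u_def G_def by (rule matrix_inv_mult_vec(1)[OF Lam_invertible[OF lam]])
  have "(\<Sum>s'\<in>UNIV. pmf (P h s a) s' * V s') = theta h \<bullet> f"
    by (simp add: f_def kernel_mean_featV[OF h])
  moreover have "(\<Sum>s'\<in>UNIV. (thetat \<bullet> phi s a s') * V s') = thetat \<bullet> f"
    by (simp add: f_def inner_featV)
  ultimately have "(\<Sum>s'\<in>UNIV. (thetat \<bullet> phi s a s') * V s') - (\<Sum>s'\<in>UNIV. pmf (P h s a) s' * V s')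
      = (thetat - theta h) \<bullet> (G *v u)"
    by (simp add: Gu inner_diff_left)
  also have "\<bar>\<dots>\<bar> \<le> wnorm (thetat - theta h) G * wnorm u G"
    by (rule wnorm_cauchy_schwarz[OF psd])
  also have "\<dots> \<le> (2 * beta) * wnorm (phiK phi H G s a) (matrix_inv G)"
  proof (rule mult_mono)
    have "thetat - theta h = (thetat - thetahat phi H lam hs K h) + (thetahat phi H lam hs K h - theta h)"
      by simp
    then show "wnorm (thetat - theta h) G \<le> 2 * beta"
      using wnorm_triangle[OF psd] thetat conf unfolding G_def by (smt (verit))
    have "wnorm u G = wnorm f (matrix_inv G)"
      unfolding u_def G_def by (rule wnorm_matrix_inv[OF Lam_invertible[OF lam]])
    then show "wnorm u G \<le> wnorm (phiK phi H G s a) (matrix_inv G)"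
      using wnorm_featV_le_phiK[OF V] by (simp add: f_def)
  qed (simp_all add: wnorm_nonneg[OF psd] \<open>0 \<le> beta\<close>)
  finally show ?thesis by (simp add: bonus_def G_def)
qed

lemma plug_in_suboptimality_le:
  assumes conf: "\<And>h. h \<in> {1..H} \<Longrightarrow> wnorm (thetahat phi H lam hs K h - theta h) (LamK hs h) \<le> beta"
    and thetat: "\<forall>h\<in>{1..H}. (\<forall>s a s'. 0 \<le> thetat h \<bullet> phi s a s')
                    \<and> (\<forall>s a. (\<Sum>s'\<in>UNIV. thetat h \<bullet> phi s a s') = 1)
                    \<and> wnorm (thetat h - thetahat phi H lam hs K h) (LamK hs h) \<le> beta"
    and R: "\<forall>h\<in>{1..H}. \<forall>s a. 0 \<le> R h s a \<and> R h s a \<le> 1"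
    and opt: "Vstar H (\<lambda>h s a s'. thetat h \<bullet> phi s a s') R 1 s1
                - Vpi H (\<lambda>h s a s'. thetat h \<bullet> phi s a s') \<pi> R 1 s1 \<le> eps"
  shows "Vstar H (\<lambda>h s a s'. pmf (P h s a) s') R 1 s1 - Vpi H (\<lambda>h s a s'. pmf (P h s a) s') \<pi> R 1 s1
     \<le> 4 * Vtstar H (\<lambda>h s a s'. pmf (P h s a) s') (bonus phi H lam beta hs K) 1 s1 + eps"
proof (rule suboptimality_le_Vtstar[OF _ _ _ _ opt])
  show "is_kernel H (\<lambda>h s a s'. thetat h \<bullet> phi s a s')" using thetat by (simp add: is_kernel_def)
  show "is_kernel H (\<lambda>h s a s'. pmf (P h s a) s')" by (simp add: is_kernel_def sum_pmf_eq_1)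
  show "unit_reward H R" using R by (simp add: unit_reward_def)
  show "\<forall>h\<in>{1..H}. \<forall>s a V. V \<in> Vset H \<longrightarrow>
      \<bar>(\<Sum>s'\<in>UNIV. thetat h \<bullet> phi s a s' * V s') - (\<Sum>s'\<in>UNIV. pmf (P h s a) s' * V s')\<bar>
        \<le> 2 * bonus phi H lam beta hs K h s a"
    using model_error_le_bonus conf thetat by blast
qed


lemma ridge_noise_completing_square:
  "ridge_noise hs h \<bullet> noise_sum hs h = 2 * (z \<bullet> noise_sum hs h) - z \<bullet> (LamK hs h *v z)
     + (z - ridge_noise hs h) \<bullet> (LamK hs h *v (z - ridge_noise hs h))"
proof -
  have "psd_symmetric (LamK hs h)" using lam by (simp add: Lam_psd_symmetric)
  then have "ridge_noise hs h \<bullet> (LamK hs h *v z) = z \<bullet> (LamK hs h *v ridge_noise hs h)"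
    unfolding psd_symmetric_def by blast
  then show ?thesis
    by (simp add: matrix_vector_mult_diff_distrib inner_diff_left inner_diff_right
        LamK_ridge_noise inner_commute)
qed

lemma ridge_noise_inner_le_trivial:
  assumes "h \<in> {1..H}"
  shows "ridge_noise hs h \<bullet> noise_sum hs h \<le> real (K - 1) * (real H)\<^sup>2"
proof -
  let ?w = "ridge_noise hs h"
  have "?w \<bullet> noise_sum hs h = 2 * (?w \<bullet> noise_sum hs h) - ?w \<bullet> (LamK hs h *v ?w)"
    by (simp add: LamK_ridge_noise)
  also have "\<dots> = (\<Sum>t\<in>{1..<K}. 2 * noise hs h t * (ph hs h t \<bullet> ?w) - (ph hs h t \<bullet> ?w)\<^sup>2) - lam * (?w \<bullet> ?w)"
    by (simp add: Lam_quadratic_form noise_sum_def inner_sum_right sum_subtractf sum_distrib_left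
        power2_eq_square inner_commute mult.assoc)
  also have "\<dots> \<le> (\<Sum>t\<in>{1..<K}. (noise hs h t)\<^sup>2)"
  proof -
    have "2 * noise hs h t * (ph hs h t \<bullet> ?w) - (ph hs h t \<bullet> ?w)\<^sup>2 \<le> (noise hs h t)\<^sup>2" for t
      using zero_le_power2[of "noise hs h t - ph hs h t \<bullet> ?w"] by (simp add: power2_eq_square algebra_simps)
    then have "(\<Sum>t\<in>{1..<K}. 2 * noise hs h t * (ph hs h t \<bullet> ?w) - (ph hs h t \<bullet> ?w)\<^sup>2)
        \<le> (\<Sum>t\<in>{1..<K}. (noise hs h t)\<^sup>2)"
      by (rule sum_mono)
    moreover have "0 \<le> lam * (?w \<bullet> ?w)" using lam by simp
    ultimately show ?thesis by linarith
  qed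
  also have "\<dots> \<le> (\<Sum>t\<in>{1..<K}. (real H)\<^sup>2)"
  proof (intro sum_mono)
    fix t
    have "\<bar>noise hs h t\<bar>\<^sup>2 \<le> (real H)\<^sup>2" using noise_abs_le[OF assms] by (intro power_mono) auto
    then show "(noise hs h t)\<^sup>2 \<le> (real H)\<^sup>2" by simp
  qed
  finally show ?thesis by simp
qed

definition transition_increment :: "nat \<Rightarrow> real^'d \<Rightarrow> real^'d^'d \<Rightarrow> 's \<Rightarrow> 'a \<Rightarrow> 's \<Rightarrow> real" where
  "transition_increment h x M s a s' =
     (x \<bullet> phiK phi H M s a) * (Vsel phi H M s a s' - theta h \<bullet> phiK phi H M s a)
     - (real H)\<^sup>2 / 8 * (x \<bullet> phiK phi H M s a)\<^sup>2"

text \<open>Only the episodes \<open>1, \<dots>, K - 1\<close> enter \<open>\<Lambda>\<^sub>K\<close>, so the last one contributes nothing.\<close>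

definition episode_increment :: "nat \<Rightarrow> real^'d \<Rightarrow> ('s,'a) traj list \<Rightarrow> ('s,'a) traj \<Rightarrow> real" where
  "episode_increment h x hs \<tau> = (if Suc (length hs) < K then
     transition_increment h x (Lam phi H lam hs (Suc (length hs)) h) (fst \<tau> ! (h - 1)) (snd \<tau> ! (h - 1)) (fst \<tau> ! h)
   else 0)"

lemma nn_integral_exp_episode_increment_le_1:
  assumes h: "h \<in> {1..H}"
  shows "(\<integral>\<^sup>+\<tau>. exp (episode_increment h x hs \<tau>) \<partial>measure_pmf (gen P \<pi> 1 H s1)) \<le> 1"
proof (cases "Suc (length hs) < K")
  case False
  then show ?thesis by (simp add: episode_increment_def measure_pmf.emeasure_space_1)
next
  case True
  define M where "M = Lam phi H lam hs (Suc (length hs)) h"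
  have "h - 1 < H" and h_eq: "1 + (h - 1) = h" "Suc (h - Suc 0) = h" using h by auto
  have "\<forall>s a. (\<integral>\<^sup>+s'. exp (transition_increment h x M s a s') \<partial>measure_pmf (P (1 + (h - 1)) s a)) \<le> 1"
  proof (intro allI)
    fix s a
    have "theta h \<bullet> phiK phi H M s a = (\<Sum>s'\<in>UNIV. pmf (P h s a) s' * Vsel phi H M s a s')"
      unfolding phiK_def by (rule kernel_mean_featV[OF h])
    moreover have "\<forall>s'. 0 \<le> Vsel phi H M s a s' \<and> Vsel phi H M s a s' \<le> real H"
      using Vsel_in_Vset[of phi H M s a] by (simp add: Vset_def)
    ultimately show "(\<integral>\<^sup>+s'. exp (transition_increment h x M s a s') \<partial>measure_pmf (P (1 + (h - 1)) s a)) \<le> 1"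
      unfolding h_eq transition_increment_def by (intro nn_integral_exp_centered_le_1)
  qed
  from nn_integral_gen_transition_le_1[where g = "\<lambda>s a s'. exp (transition_increment h x M s a s')"
      and P = P and h = 1,
      OF \<open>h - 1 < H\<close> this] True show ?thesis
    by (simp add: episode_increment_def M_def h_eq)
qed

lemma episode_sum_episode_increment:
  assumes "length hs = K"
  shows "episode_sum (episode_increment h x) hs
    = x \<bullet> noise_sum hs h - (real H)\<^sup>2 / 8 * (\<Sum>t\<in>{1..<K}. (x \<bullet> ph hs h t)\<^sup>2)"
proof -
  define f where "f t = (x \<bullet> ph hs h t) * noise hs h t - (real H)\<^sup>2 / 8 * (x \<bullet> ph hs h t)\<^sup>2" for t
  have "episode_sum (episode_increment h x) hs = (\<Sum>t<K. if Suc t < K then f (Suc t) else 0)"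
    unfolding episode_sum_def assms
  proof (rule sum.cong[OF refl])
    fix t assume "t \<in> {..<K}"
    then have "length (take t hs) = t" using assms by simp
    then show "episode_increment h x (take t hs) (hs ! t) = (if Suc t < K then f (Suc t) else 0)"
      by (simp add: episode_increment_def transition_increment_def f_def noise_def hist_feature_def
          Lam_def Gram_take st_def ac_def)
  qed
  also have "\<dots> = (\<Sum>t\<in>{1..K}. if t < K then f t else 0)"
    by (simp add: sum.atLeast1_atMost_eq)
  also have "\<dots> = (\<Sum>t\<in>{1..<K}. f t)"
    by (simp add: sum.inter_filter[symmetric]) (rule sum.cong; auto)
  also have "\<dots> = x \<bullet> noise_sum hs h - (real H)\<^sup>2 / 8 * (\<Sum>t\<in>{1..<K}. (x \<bullet> ph hs h t)\<^sup>2)"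
    by (simp add: f_def noise_sum_def inner_sum_right sum_subtractf sum_distrib_left mult.commute)
  finally show ?thesis .
qed



text \<open>Completing the square at a net point \<open>z\<close> near \<open>\<Lambda>\<^sup>-\<^sup>1 S\<close>: the linear part is the
  supermartingale exponent in direction \<open>4 z / H\<^sup>2\<close>, the rest is the approximation error.\<close>

lemma ridge_noise_inner_le_net:
  assumes "length hs = K"
  shows "ridge_noise hs h \<bullet> noise_sum hs h
    \<le> (real H)\<^sup>2 / 2 * episode_sum (episode_increment h ((4 / (real H)\<^sup>2) *\<^sub>R z)) hs
       + (lam + real (K - 1) * (real H)\<^sup>2) * ((z - ridge_noise hs h) \<bullet> (z - ridge_noise hs h))"
proof -
  define e where "e = z - ridge_noise hs h"
  have "(real H)\<^sup>2 / 2 * episode_sum (episode_increment h ((4 / (real H)\<^sup>2) *\<^sub>R z)) hs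
      = (real H)\<^sup>2 / 2 * ((4 / (real H)\<^sup>2) * (z \<bullet> noise_sum hs h)
          - (real H)\<^sup>2 / 8 * ((4 / (real H)\<^sup>2)\<^sup>2 * (\<Sum>t\<in>{1..<K}. (z \<bullet> ph hs h t)\<^sup>2)))"
    by (simp only: episode_sum_episode_increment[OF assms] inner_scaleR_left power_mult_distrib
        sum_distrib_left[symmetric])
  also have "\<dots> = 2 * (z \<bullet> noise_sum hs h) - (\<Sum>t\<in>{1..<K}. (z \<bullet> ph hs h t)\<^sup>2)"
    using H by (simp add: field_simps power2_eq_square)
  finally have "(real H)\<^sup>2 / 2 * episode_sum (episode_increment h ((4 / (real H)\<^sup>2) *\<^sub>R z)) hs
      = 2 * (z \<bullet> noise_sum hs h) - (\<Sum>t\<in>{1..<K}. (z \<bullet> ph hs h t)\<^sup>2)" .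
  moreover have "(\<Sum>t\<in>{1..<K}. (z \<bullet> ph hs h t)\<^sup>2) \<le> z \<bullet> (LamK hs h *v z)"
    using lam by (simp add: Lam_quadratic_form power2_eq_square inner_commute)
  moreover have "e \<bullet> (LamK hs h *v e) \<le> (lam + real (K - 1) * (real H)\<^sup>2) * (e \<bullet> e)"
  proof -
    have "(ph hs h t \<bullet> e)\<^sup>2 \<le> (real H)\<^sup>2 * (e \<bullet> e)" for t
    proof -
      have "\<bar>ph hs h t \<bullet> e\<bar> \<le> real H * norm e"
        using Cauchy_Schwarz_ineq2[of "ph hs h t" e] norm_hist_feature_le[OF feat H]
        by (meson mult_right_mono norm_ge_zero order_trans)
      then show ?thesis
        by (metis abs_ge_zero power2_abs power_mono power_mult_distrib power2_norm_eq_inner)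
    qed
    then have "(\<Sum>t\<in>{1..<K}. (ph hs h t \<bullet> e)\<^sup>2) \<le> real (K - 1) * ((real H)\<^sup>2 * (e \<bullet> e))"
      using sum_mono[of "{1..<K}" "\<lambda>t. (ph hs h t \<bullet> e)\<^sup>2" "\<lambda>_. (real H)\<^sup>2 * (e \<bullet> e)"] by simp
    then show ?thesis by (simp add: Lam_quadratic_form power2_eq_square algebra_simps)
  qed
  ultimately show ?thesis
    using ridge_noise_completing_square[of hs h z] unfolding e_def by linarith
qed



lemma net_hit_if_noise_large:
  assumes h: "h \<in> {1..H}" and len: "length hs = K" and "0 < eps"
    and radius: "real (K - 1) * (real H)\<^sup>2 / lam \<le> real J * eps"
    and err: "(lam + real (K - 1) * (real H)\<^sup>2) * (real CARD('d) * eps\<^sup>2 / 4) \<le> 1 / 2"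
    and large: "(real H)\<^sup>2 / 2 * (L + 1) < ridge_noise hs h \<bullet> noise_sum hs h"
  shows "\<exists>x\<in>(\<lambda>z. (4 / (real H)\<^sup>2) *\<^sub>R z) ` cube_grid eps J. L \<le> episode_sum (episode_increment h x) hs"
proof -
  have "norm (ridge_noise hs h) \<le> norm (noise_sum hs h) / lam" by (rule norm_ridge_noise_le)
  also have "\<dots> \<le> real (K - 1) * (real H)\<^sup>2 / lam"
    using norm_noise_sum_le[OF h] lam by (intro divide_right_mono) auto
  also note radius
  finally obtain z where z: "z \<in> cube_grid eps J"
    and dist: "(z - ridge_noise hs h) \<bullet> (z - ridge_noise hs h) \<le> real CARD('d) * eps\<^sup>2 / 4"
    using cube_grid_approx[OF \<open>0 < eps\<close>] by blast
  define G where "G = episode_sum (episode_increment h ((4 / (real H)\<^sup>2) *\<^sub>R z)) hs"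
  have "0 \<le> lam + real (K - 1) * (real H)\<^sup>2" using lam by simp
  from mult_left_mono[OF dist this] err
  have "(lam + real (K - 1) * (real H)\<^sup>2) * ((z - ridge_noise hs h) \<bullet> (z - ridge_noise hs h)) \<le> 1 / 2"
    by linarith
  with ridge_noise_inner_le_net[OF len, of h z] large
  have "(real H)\<^sup>2 / 2 * (L + 1) < (real H)\<^sup>2 / 2 * G + 1 / 2"
    unfolding G_def by linarith
  also have "\<dots> \<le> (real H)\<^sup>2 / 2 * (G + 1)"
    using H by (simp add: distrib_left)
  finally have "L \<le> G" using H by (simp add: mult_less_cancel_left_pos)
  with z show ?thesis unfolding G_def by blast
qed

lemma prob_net_hit_le:
  assumes "finite X"
  shows "measure_pmf.prob (explore P s1 H pol K [])
      {hs. \<exists>h\<in>{1..H}. \<exists>x\<in>X. L \<le> episode_sum (episode_increment h x) hs}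
    \<le> real H * real (card X) * exp (- L)"
proof -
  let ?M = "explore P s1 H pol K []"
  define A where "A = (\<lambda>(h, x). {hs. L \<le> episode_sum (episode_increment h x) hs})"
  have "{hs. \<exists>h\<in>{1..H}. \<exists>x\<in>X. L \<le> episode_sum (episode_increment h x) hs} = (\<Union>p\<in>{1..H} \<times> X. A p)"
    by (auto simp: A_def)
  also have "measure_pmf.prob ?M \<dots> \<le> (\<Sum>p\<in>{1..H} \<times> X. measure_pmf.prob ?M (A p))"
    by (rule measure_pmf.finite_measure_subadditive_finite) (auto simp: assms)
  also have "\<dots> \<le> (\<Sum>p\<in>{1..H} \<times> X. exp (- L))"
  proof (intro sum_mono)
    fix p assume "p \<in> {1..H} \<times> X"
    then obtain h x where p: "p = (h, x)" and h: "h \<in> {1..H}" by auto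
    have "\<forall>hs. (\<integral>\<^sup>+\<tau>. exp (episode_increment h x hs \<tau>) \<partial>measure_pmf (gen P (pol hs) 1 H s1)) \<le> 1"
      using nn_integral_exp_episode_increment_le_1[OF h] by blast
    from prob_episode_sum_ge_le[OF this] show "measure_pmf.prob ?M (A p) \<le> exp (- L)"
      by (simp add: A_def p)
  qed
  also have "\<dots> = real H * real (card X) * exp (- L)"
    by (simp add: card_cartesian_product)
  finally show ?thesis .
qed


lemma prob_noise_exceeds_net_bound_le:
  assumes "0 < eps"
    and radius: "real (K - 1) * (real H)\<^sup>2 / lam \<le> real J * eps"
    and err: "(lam + real (K - 1) * (real H)\<^sup>2) * (real CARD('d) * eps\<^sup>2 / 4) \<le> 1 / 2"
  shows "measure_pmf.prob (explore P s1 H pol K [])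
      {hs. \<exists>h\<in>{1..H}. (real H)\<^sup>2 / 2 * (L + 1) < ridge_noise hs h \<bullet> noise_sum hs h}
    \<le> real H * real (card (cube_grid eps J :: (real^'d) set)) * exp (- L)"
    (is "measure_pmf.prob ?M ?large \<le> _")
proof -
  define X where "X = (\<lambda>z. (4 / (real H)\<^sup>2) *\<^sub>R z) ` (cube_grid eps J :: (real^'d) set)"
  have "?large \<inter> set_pmf ?M \<subseteq> {hs. \<exists>h\<in>{1..H}. \<exists>x\<in>X. L \<le> episode_sum (episode_increment h x) hs}"
  proof safe
    fix hs h assume "hs \<in> set_pmf ?M" and h: "h \<in> {1..H}"
      and "(real H)\<^sup>2 / 2 * (L + 1) < ridge_noise hs h \<bullet> noise_sum hs h"
    moreover have "length hs = K" using length_explore[OF \<open>hs \<in> set_pmf ?M\<close>] by simp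
    ultimately show "\<exists>h\<in>{1..H}. \<exists>x\<in>X. L \<le> episode_sum (episode_increment h x) hs"
      using net_hit_if_noise_large[OF h _ \<open>0 < eps\<close> radius err] unfolding X_def by blast
  qed
  then have "measure_pmf.prob ?M ?large
      \<le> measure_pmf.prob ?M {hs. \<exists>h\<in>{1..H}. \<exists>x\<in>X. L \<le> episode_sum (episode_increment h x) hs}"
    by (subst measure_Int_set_pmf[symmetric]) (rule measure_pmf.finite_measure_mono, simp_all)
  also have "\<dots> \<le> real H * real (card X) * exp (- L)"
    by (rule prob_net_hit_le) (simp add: X_def finite_cube_grid)
  also have "\<dots> \<le> real H * real (card (cube_grid eps J :: (real^'d) set)) * exp (- L)"
    by (intro mult_right_mono mult_left_mono) (simp_all add: card_image_le X_def finite_cube_grid)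
  finally show ?thesis .
qed

text \<open>If \<open>K - 1 \<le> d ell\<close> the bound holds deterministically; otherwise a net of mesh \<open>1 / (K H)\<close>
  and a union bound over the \<open>H\<close> steps and the net points give failure probability \<open>delta\<close>.\<close>

lemma prob_noise_large_le:
  assumes lam1: "lam \<le> 1" and delta: "0 < delta" "delta < 1"
  shows "measure_pmf.prob (explore P s1 H pol K [])
    {hs. \<exists>h\<in>{1..H}. (real H)\<^sup>2 * (real CARD('d) * ln (4 * real H ^ 3 * real K / lam / delta))
                       < ridge_noise hs h \<bullet> noise_sum hs h} \<le> delta"
    (is "measure_pmf.prob ?M ?large \<le> _")
proof -
  define d ell where "d = CARD('d)" and "ell = ln (4 * real H ^ 3 * real K / lam / delta)"
  show ?thesis
  proof (cases "real (K - 1) \<le> real d * ell")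
    case True
    have "real (K - 1) * (real H)\<^sup>2 \<le> (real H)\<^sup>2 * (real d * ell)"
      using True by (simp add: mult.commute mult_right_mono)
    then have small: "\<not> (real H)\<^sup>2 * (real d * ell) < ridge_noise hs h \<bullet> noise_sum hs h"
      if "h \<in> {1..H}" for hs h
      using ridge_noise_inner_le_trivial[OF that, of hs] by linarith
    have "?large = {}"
      using small[unfolded d_def ell_def] by blast
    then show ?thesis using delta by simp
  next
    case False
    define eps J where "eps = 1 / (real K * real H)" and "J = nat \<lceil>real K ^ 2 * real H ^ 3 / lam\<rceil>"
    define C where "C = card (cube_grid eps J :: (real^'d) set)"
    define L where "L = ln (real H * real C / delta)"
    have "1 \<le> ell" unfolding ell_def by (rule ln_confidence_ge_1[OF H K lam lam1 delta])
    then have "real d \<le> real d * ell" by (simp add: mult_le_cancel_left1)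
    with False have "real d \<le> real K" by linarith
    have "1 \<le> d" by (simp add: d_def Suc_le_eq)
    have "1 \<le> C" using card_cube_grid_pos by (simp add: C_def Suc_le_eq)
    moreover have "C \<le> (2 * J + 1) ^ d" unfolding C_def d_def by (rule card_cube_grid_le)
    ultimately have "L + 1 \<le> 2 * real d * ell"
      unfolding L_def ell_def by (rule net_log_card_bound[OF H K \<open>1 \<le> d\<close> lam lam1 delta _ _ J_def])
    from mult_left_mono[OF this, of "(real H)\<^sup>2 / 2"]
    have "(real H)\<^sup>2 / 2 * (L + 1) \<le> (real H)\<^sup>2 * (real d * ell)" by simp
    then have "?large \<subseteq> {hs. \<exists>h\<in>{1..H}. (real H)\<^sup>2 / 2 * (L + 1) < ridge_noise hs h \<bullet> noise_sum hs h}"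
      unfolding d_def ell_def by (blast intro: le_less_trans)
    then have "measure_pmf.prob ?M ?large
        \<le> measure_pmf.prob ?M {hs. \<exists>h\<in>{1..H}. (real H)\<^sup>2 / 2 * (L + 1) < ridge_noise hs h \<bullet> noise_sum hs h}"
      by (rule measure_pmf.finite_measure_mono) simp
    also have "\<dots> \<le> real H * real C * exp (- L)"
      unfolding C_def
    proof (rule prob_noise_exceeds_net_bound_le)
      show "0 < eps" using H K by (simp add: eps_def)
      show "real (K - 1) * (real H)\<^sup>2 / lam \<le> real J * eps"
        unfolding eps_def J_def by (rule net_radius_bound[OF H K lam])
      show "(lam + real (K - 1) * (real H)\<^sup>2) * (real CARD('d) * eps\<^sup>2 / 4) \<le> 1 / 2"
        unfolding eps_def d_def[symmetric] by (rule net_error_bound[OF H K lam1 \<open>real d \<le> real K\<close>])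
    qed
    also have "\<dots> = delta"
      using H delta \<open>1 \<le> C\<close> by (simp add: L_def exp_minus)
    finally show ?thesis .
  qed
qed

lemma thetahat_confidence:
  assumes "ridge_noise hs h \<bullet> noise_sum hs h \<le> r\<^sup>2" and "0 \<le> r" and "norm (theta h) \<le> B"
  shows "wnorm (thetahat phi H lam hs K h - theta h) (LamK hs h) \<le> r + sqrt lam * B"
proof -
  have "sqrt lam * norm (theta h) \<le> sqrt lam * B" using assms(3) lam by (simp add: mult_left_mono)
  with thetahat_error_le[of hs h] real_sqrt_le_mono[OF assms(1)] assms(2) show ?thesis by simp
qed

end

theorem lemma1:
  fixes phi :: "'s::finite \<Rightarrow> 'a::finite \<Rightarrow> 's \<Rightarrow> real^'d"
    and theta :: "nat \<Rightarrow> real^'d"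
    and P :: "nat \<Rightarrow> 's \<Rightarrow> 'a \<Rightarrow> 's pmf"
    and H K :: nat and B delta eps_opt lam beta :: real and s1 :: 's
  assumes H: "H \<ge> 1" and K: "K \<ge> 1" and B: "B > 0"
    and delta: "0 < delta" "delta < 1"
    and feat: "\<forall>s a V. (\<forall>s'. 0 \<le> V s' \<and> V s' \<le> 1) \<longrightarrow> norm (featV phi s a V) \<le> 1"
    and theta_bd: "\<forall>h\<in>{1..H}. norm (theta h) \<le> B"
    and P_lin: "\<forall>h\<in>{1..H}. \<forall>s a s'. pmf (P h s a) s' = theta h \<bullet> phi s a s'"
    and lam_def: "lam = 1 / B\<^sup>2"
    and beta_def: "beta = real H * sqrt (real CARD('d) * ln (4 * real H ^ 3 * real K / lam / delta))
                          + sqrt lam * B"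
  shows "measure_pmf.prob (exploration phi H lam beta P s1 K)
     {hs. \<forall>thetat :: nat \<Rightarrow> real^'d.
        (\<forall>h\<in>{1..H}. (\<forall>s a s'. 0 \<le> thetat h \<bullet> phi s a s')
                    \<and> (\<forall>s a. (\<Sum>s'\<in>UNIV. thetat h \<bullet> phi s a s') = 1)
                    \<and> wnorm (thetat h - thetahat phi H lam hs K h) (Lam phi H lam hs K h) \<le> beta)
        \<longrightarrow> (\<forall>R \<pi>. (\<forall>h\<in>{1..H}. \<forall>s a. 0 \<le> R h s a \<and> R h s a \<le> 1)
                 \<and> Vstar H (\<lambda>h s a s'. thetat h \<bullet> phi s a s') R 1 s1
                     - Vpi H (\<lambda>h s a s'. thetat h \<bullet> phi s a s') \<pi> R 1 s1 \<le> eps_opt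
              \<longrightarrow> Vstar H (\<lambda>h s a s'. pmf (P h s a) s') R 1 s1
                     - Vpi H (\<lambda>h s a s'. pmf (P h s a) s') \<pi> R 1 s1
                  \<le> 4 * Vtstar H (\<lambda>h s a s'. pmf (P h s a) s') (bonus phi H lam beta hs K) 1 s1 + eps_opt)}
     \<ge> 1 - delta"
proof -
  have "0 < lam" using B by (simp add: lam_def)
  interpret linear_mixture_exploration phi H lam theta P K
    using H K \<open>0 < lam\<close> feat P_lin by unfold_locales
  have "1 \<le> B" using theta_norm_ge_1[of 1] theta_bd H by force
  then have lam1: "lam \<le> 1" using B by (simp add: lam_def power_le_one_iff one_le_power)
  define r where "r = real H * sqrt (real CARD('d) * ln (4 * real H ^ 3 * real K / lam / delta))"
  have "0 \<le> r" and r2: "r\<^sup>2 = (real H)\<^sup>2 * (real CARD('d) * ln (4 * real H ^ 3 * real K / lam / delta))"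
    using ln_confidence_ge_1[OF H K \<open>0 < lam\<close> lam1 delta] by (simp_all add: r_def power_mult_distrib)
  let ?small = "{hs. \<forall>h\<in>{1..H}. ridge_noise hs h \<bullet> noise_sum hs h \<le> r\<^sup>2}"
  have conf: "wnorm (thetahat phi H lam hs K h - theta h) (LamK hs h) \<le> beta"
    if "hs \<in> ?small" and "h \<in> {1..H}" for hs h
    using thetahat_confidence[OF _ \<open>0 \<le> r\<close>] that theta_bd unfolding beta_def r_def[symmetric] by blast
  have "measure_pmf.prob (exploration phi H lam beta P s1 K) (UNIV - ?small) \<le> delta"
    using prob_noise_large_le[OF lam1 delta] by (simp add: exploration_def r2 set_diff_eq not_le)
  then have "1 - delta \<le> measure_pmf.prob (exploration phi H lam beta P s1 K) ?small"
    using measure_pmf.prob_compl[of ?small] by simp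
  then show ?thesis
    by (rule order_trans[OF _ measure_pmf.finite_measure_mono])
      (blast intro: plug_in_suboptimality_le conf, simp)
qed

end
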